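(* Let $p$ be a prime, $M\ge 2$ an integer, and let $A\subseteq\mathrm{SL}_2(\mathbb{F}_p)$, $B$ and $w_M$ be as described in the context. If $w_M > 3/4$, then \[ |ABA|,~ |A^{-1}BA^{-1}| \gg p^3 \,. \]
   Context: Let $Q=p-1$ and let $F_M(Q)$ be the set of rationals $u/v\in[0,1]$ with $(u,v)=1$, $v\le Q$, whose continued fraction $[0;b_1,\dots,b_s]$ has all partial quotients $b_j\le M$; let $w_M$ be the Hausdorff dimension of the set of irrationals in $[0,1]$ with all partial quotients $\le M$. Each $p_s/q_s=[0;b_1,\dots,b_s]$ corresponds to the matrix $\begin{pmatrix}0&1\\1&b_1\end{pmatrix}\cdots\begin{pmatrix}0&1\\1&b_s\end{pmatrix}=\begin{pmatrix}p_{s-1}&p_s\\ q_{s-1}&q_s\end{pmatrix}$. Let $A\subseteq \mathrm{SL}_2(\mathbb{F}_p)$ be the set of reductions mod $p$ of such matrices coming from elements of $F_M(Q)$ with $s$ even (so $|A|\asymp_M p^{2w_M}$), and let $B$ be the standard Borel subgroup of upper-triangular matrices of $\mathrm{SL}_2(\mathbb{F}_p)$. *)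

theory Defs
  imports "HOL-Analysis.Analysis" "HOL-Computational_Algebra.Primes"
begin

definition hd_term :: "real \<Rightarrow> real set \<Rightarrow> real" where
  "hd_term s U = (if U = {} then 0 else if s = 0 then 1 else diameter U powr s)"

definition hausdorff_pre :: "real \<Rightarrow> real \<Rightarrow> real set \<Rightarrow> ennreal" where
  "hausdorff_pre s \<delta> E =
     (INF f \<in> {f :: nat \<Rightarrow> real set. E \<subseteq> (\<Union>i. f i) \<and>
                 (\<forall>i. bounded (f i) \<and> diameter (f i) \<le> \<delta>)}.
        (\<Sum>i. ennreal (hd_term s (f i))))"

definition hausdorff_measure :: "real \<Rightarrow> real set \<Rightarrow> ennreal" where
  "hausdorff_measure s E = (SUP \<delta> \<in> {0<..}. hausdorff_pre s \<delta> E)"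

definition hausdorff_dim :: "real set \<Rightarrow> real" where
  "hausdorff_dim E = Inf {s. s \<ge> 0 \<and> hausdorff_measure s E = 0}"

text \<open>Gauss map; the (n+1)-st partial quotient of x in (0,1) is floor(1/T^n x).\<close>
definition gauss_map :: "real \<Rightarrow> real" where
  "gauss_map x = frac (1 / x)"

definition partial_quotient :: "real \<Rightarrow> nat \<Rightarrow> int" where
  "partial_quotient x n = \<lfloor>1 / (gauss_map ^^ n) x\<rfloor>"

definition cf_bounded_set :: "nat \<Rightarrow> real set" where
  "cf_bounded_set M = {x \<in> {0..1}. x \<notin> \<rat> \<and> (\<forall>n. partial_quotient x n \<le> int M)}"

definition w :: "nat \<Rightarrow> real" where
  "w M = hausdorff_dim (cf_bounded_set M)"

text \<open>(a,b,c,d) represents the matrix [[a,b],[c,d]].\<close>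
type_synonym mat2 = "int \<times> int \<times> int \<times> int"

fun mmul :: "mat2 \<Rightarrow> mat2 \<Rightarrow> mat2" where
  "mmul (a,b,c,d) (a',b',c',d') = (a*a' + b*c', a*b' + b*d', c*a' + d*c', c*b' + d*d')"

definition cf_gen :: "nat \<Rightarrow> mat2" where
  "cf_gen b = (0, 1, 1, int b)"

text \<open>[[0,1],[1,b_1]] ... [[0,1],[1,b_s]] = [[p_{s-1}, p_s],[q_{s-1}, q_s]]\<close>
definition cf_matrix :: "nat list \<Rightarrow> mat2" where
  "cf_matrix bs = foldr (\<lambda>b acc. mmul (cf_gen b) acc) bs (1, 0, 0, 1)"

fun q_entry :: "mat2 \<Rightarrow> int" where
  "q_entry (a,b,c,d) = d"

section \<open>SL_2(F_p), entries represented in {0..p-1}\<close>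

fun red :: "nat \<Rightarrow> mat2 \<Rightarrow> mat2" where
  "red p (a,b,c,d) = (a mod int p, b mod int p, c mod int p, d mod int p)"

definition mulp :: "nat \<Rightarrow> mat2 \<Rightarrow> mat2 \<Rightarrow> mat2" where
  "mulp p x y = red p (mmul x y)"

fun invp :: "nat \<Rightarrow> mat2 \<Rightarrow> mat2" where
  "invp p (a,b,c,d) = red p (d, -b, -c, a)"

definition SL2 :: "nat \<Rightarrow> mat2 set" where
  "SL2 p = {(a,b,c,d). a \<in> {0..<int p} \<and> b \<in> {0..<int p} \<and> c \<in> {0..<int p} \<and>
                        d \<in> {0..<int p} \<and> (a*d - b*c) mod int p = 1 mod int p}"

definition borel :: "nat \<Rightarrow> mat2 set" where
  "borel p = {x \<in> SL2 p. fst (snd (snd x)) = 0}"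

definition cfA :: "nat \<Rightarrow> nat \<Rightarrow> mat2 set" where
  "cfA M p = {red p (cf_matrix bs) | bs. even (length bs) \<and> set bs \<subseteq> {1..M} \<and>
                                        q_entry (cf_matrix bs) \<le> int p - 1}"

definition prod3 :: "nat \<Rightarrow> mat2 set \<Rightarrow> mat2 set \<Rightarrow> mat2 set \<Rightarrow> mat2 set" where
  "prod3 p X Y Z = {mulp p (mulp p x y) z | x y z. x \<in> X \<and> y \<in> Y \<and> z \<in> Z}"

definition inv_set :: "nat \<Rightarrow> mat2 set \<Rightarrow> mat2 set" where
  "inv_set p X = invp p ` X"

end

(*
  For M >= 3 the bound holds whatever w M is; the hypothesis w M > 3/4 only serves to exclude M = 2.

  A translate g B h of the Borel subgroup has p (p - 1) elements, and x lies in it only if the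
  lower left entry of g^-1 x h^-1 vanishes, a bilinear condition in the second row of g^-1 and the
  first column of h^-1. If these rows, and these columns, are pairwise independent modulo p, two
  distinct translates meet in at most p - 1 points, so n <= p translates cover at least n p^2 / 4
  elements (Bonferroni). Suitable g and h in A come from continued fractions with partial quotients
  in {1, 2, 3} and denominators q < sqrt p / 10: the relevant row or column is (p_c, q_c), possibly
  rotated by a right angle, and distinct reduced fractions with such small denominators remain
  independent modulo p. There are at least c sqrt p of them, since the sum over a, b in {1, 2, 3}
  of 1 / ((a + 1)(b + 1)) exceeds 1, whence |ABA| >> p^3; inverting the same families handles
  A^-1 B A^-1.

  For M = 2, cover E_2 by the 4^k cylinders of depth 2k. A cylinder with denominator q has
  diameter at most q^-2, and 4^(-3/4) + 2 * 9^(-3/4) + 25^(-3/4) < 17/20, so the (3/4)-dimensional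
  covering sums are at most (17/20)^k. Hence the (3/4)-dimensional Hausdorff measure of E_2
  vanishes and w 2 <= 3/4.
*)

theory Submission
  imports Defs
begin

section \<open>Integer $2\times 2$ matrices\<close>

definition m11 :: "mat2 \<Rightarrow> int" where "m11 x = fst x"
definition m12 :: "mat2 \<Rightarrow> int" where "m12 x = fst (snd x)"
definition m21 :: "mat2 \<Rightarrow> int" where "m21 x = fst (snd (snd x))"
definition m22 :: "mat2 \<Rightarrow> int" where "m22 x = snd (snd (snd x))"

lemma mat2_entries [simp]:
  "m11 (a, b, c, d) = a" "m12 (a, b, c, d) = b" "m21 (a, b, c, d) = c" "m22 (a, b, c, d) = d"
  by (simp_all add: m11_def m12_def m21_def m22_def)

lemma mat2_eq_entries: "x = (m11 x, m12 x, m21 x, m22 x)"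
  by (simp add: m11_def m12_def m21_def m22_def)

lemma mat2_eqI: "m11 x = m11 y \<Longrightarrow> m12 x = m12 y \<Longrightarrow> m21 x = m21 y \<Longrightarrow> m22 x = m22 y \<Longrightarrow> x = y"
  by (metis mat2_eq_entries)

lemma mmul_entries [simp]:
  "m11 (mmul x y) = m11 x * m11 y + m12 x * m21 y"
  "m12 (mmul x y) = m11 x * m12 y + m12 x * m22 y"
  "m21 (mmul x y) = m21 x * m11 y + m22 x * m21 y"
  "m22 (mmul x y) = m21 x * m12 y + m22 x * m22 y"
  by (cases x rule: prod_cases4; cases y rule: prod_cases4; simp)+

lemma mmul_assoc: "mmul (mmul x y) z = mmul x (mmul y z)"
  by (rule mat2_eqI) (simp_all add: algebra_simps)

lemma mmul_one_left [simp]: "mmul (1, 0, 0, 1) x = x"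
  by (rule mat2_eqI) simp_all

definition mdet :: "mat2 \<Rightarrow> int" where
  "mdet x = m11 x * m22 x - m12 x * m21 x"

definition madj :: "mat2 \<Rightarrow> mat2" where
  "madj x = (m22 x, - m12 x, - m21 x, m11 x)"

lemma madj_entries [simp]:
  "m11 (madj x) = m22 x" "m12 (madj x) = - m12 x" "m21 (madj x) = - m21 x" "m22 (madj x) = m11 x"
  by (simp_all add: madj_def)

lemma mdet_mmul: "mdet (mmul x y) = mdet x * mdet y"
  by (simp add: mdet_def algebra_simps)

lemma mmul_madj_left: "mmul (madj x) x = (mdet x, 0, 0, mdet x)"
  and mmul_madj_right: "mmul x (madj x) = (mdet x, 0, 0, mdet x)"
  by (rule mat2_eqI; simp add: mdet_def algebra_simps)+

definition dot :: "int \<times> int \<Rightarrow> int \<times> int \<Rightarrow> int" where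
  "dot u v = fst u * fst v + snd u * snd v"

definition det2 :: "int \<times> int \<Rightarrow> int \<times> int \<Rightarrow> int" where
  "det2 u v = fst u * snd v - snd u * fst v"

definition mv :: "mat2 \<Rightarrow> int \<times> int \<Rightarrow> int \<times> int" where
  "mv x v = (m11 x * fst v + m12 x * snd v, m21 x * fst v + m22 x * snd v)"

lemma dot_commute: "dot u v = dot v u"
  by (simp add: dot_def mult.commute)

lemma det2_mv: "det2 (mv x u) (mv x v) = mdet x * det2 u v"
  by (simp add: det2_def mv_def mdet_def algebra_simps)

section \<open>Continued fraction matrices\<close>

abbreviation cf_p_prev :: "nat list \<Rightarrow> int" where "cf_p_prev bs \<equiv> m11 (cf_matrix bs)"
abbreviation cf_p :: "nat list \<Rightarrow> int" where "cf_p bs \<equiv> m12 (cf_matrix bs)"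
abbreviation cf_q_prev :: "nat list \<Rightarrow> int" where "cf_q_prev bs \<equiv> m21 (cf_matrix bs)"
abbreviation cf_q :: "nat list \<Rightarrow> int" where "cf_q bs \<equiv> m22 (cf_matrix bs)"

lemma cf_matrix_Nil [simp]: "cf_matrix [] = (1, 0, 0, 1)"
  by (simp add: cf_matrix_def)

lemma cf_matrix_Cons: "cf_matrix (b # bs) = mmul (cf_gen b) (cf_matrix bs)"
  by (simp add: cf_matrix_def)

lemma cf_matrix_Cons_entries [simp]:
  "cf_p_prev (b # bs) = cf_q_prev bs"
  "cf_p (b # bs) = cf_q bs"
  "cf_q_prev (b # bs) = cf_p_prev bs + int b * cf_q_prev bs"
  "cf_q (b # bs) = cf_p bs + int b * cf_q bs"
  by (simp_all add: cf_matrix_Cons cf_gen_def)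

lemma cf_matrix_append: "cf_matrix (u @ v) = mmul (cf_matrix u) (cf_matrix v)"
  by (induction u) (simp_all add: cf_matrix_Cons mmul_assoc)

lemma cf_matrix_snoc_entries:
  "cf_p_prev (bs @ [b]) = cf_p bs"
  "cf_p (bs @ [b]) = cf_p_prev bs + int b * cf_p bs"
  "cf_q_prev (bs @ [b]) = cf_q bs"
  "cf_q (bs @ [b]) = cf_q_prev bs + int b * cf_q bs"
  by (simp_all add: cf_matrix_append cf_matrix_Cons cf_gen_def)

lemma cf_matrix_rev_entries:
  "cf_p_prev (rev bs) = cf_p_prev bs" "cf_p (rev bs) = cf_q_prev bs"
  "cf_q_prev (rev bs) = cf_p bs" "cf_q (rev bs) = cf_q bs"
  by (induction bs) (simp_all add: cf_matrix_snoc_entries)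

lemma mdet_cf_matrix: "mdet (cf_matrix bs) = (-1) ^ length bs"
  by (induction bs) (simp_all add: mdet_def algebra_simps)

lemma cf_matrix_entries_nonneg:
  assumes "0 \<notin> set bs"
  shows "0 \<le> cf_p_prev bs \<and> 0 \<le> cf_p bs \<and> 0 \<le> cf_q_prev bs \<and> 1 \<le> cf_q bs
    \<and> cf_p bs \<le> cf_q bs \<and> cf_q_prev bs \<le> cf_q bs \<and> (bs \<noteq> [] \<longrightarrow> cf_p_prev bs \<le> cf_p bs)"
  using assms
proof (induction bs)
  case (Cons b bs)
  then have IH: "0 \<le> cf_p_prev bs" "0 \<le> cf_p bs" "0 \<le> cf_q_prev bs" "1 \<le> cf_q bs"
    "cf_p bs \<le> cf_q bs" "cf_q_prev bs \<le> cf_q bs" "bs \<noteq> [] \<Longrightarrow> cf_p_prev bs \<le> cf_p bs"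
    by simp_all
  have b: "1 \<le> int b" using Cons.prems by (simp add: Suc_le_eq)
  have "cf_q bs \<le> int b * cf_q bs" "0 \<le> int b * cf_q_prev bs"
    "int b * cf_q_prev bs \<le> int b * cf_q bs"
    using IH b by (simp_all add: mult_left_mono)
  moreover have "cf_p_prev bs + int b * cf_q_prev bs \<le> cf_p bs + int b * cf_q bs"
  proof (cases "bs = []")
    case False
    then show ?thesis using IH by (simp add: mult_left_mono add_mono)
  qed (use b in simp)
  ultimately show ?case
    using IH b by (simp only: cf_matrix_Cons_entries) (intro conjI impI TrueI; linarith)
qed simp

lemma cf_q_pos: "0 \<notin> set bs \<Longrightarrow> 1 \<le> cf_q bs"
  using cf_matrix_entries_nonneg by blast

lemma cf_q_append_ge: "0 \<notin> set u \<Longrightarrow> 0 \<notin> set v \<Longrightarrow> cf_q u * cf_q v \<le> cf_q (u @ v)"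
  using cf_matrix_entries_nonneg[of u] cf_matrix_entries_nonneg[of v]
  by (simp add: cf_matrix_append)

definition weight :: "nat list \<Rightarrow> nat" where
  "weight bs = (\<Prod>b\<leftarrow>bs. b + 1)"

lemma weight_simps [simp]:
  "weight [] = 1" "weight (b # bs) = (b + 1) * weight bs" "weight (u @ v) = weight u * weight v"
  by (simp_all add: weight_def)

lemma cf_q_le_weight: "0 \<notin> set bs \<Longrightarrow> cf_q bs \<le> int (weight bs)"
proof (induction bs)
  case (Cons b bs)
  have "cf_q (b # bs) \<le> (int b + 1) * cf_q bs"
    using cf_matrix_entries_nonneg[of bs] Cons.prems by (simp add: algebra_simps)
  also have "\<dots> \<le> (int b + 1) * int (weight bs)"
    using Cons by (intro mult_left_mono) auto
  finally show ?case by (simp add: algebra_simps)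
qed simp

lemma coprime_cf_p_cf_q: "coprime (cf_p bs) (cf_q bs)"
proof (rule coprimeI)
  fix k assume "k dvd cf_p bs" "k dvd cf_q bs"
  then have "k dvd mdet (cf_matrix bs)"
    unfolding mdet_def by simp
  then have "k dvd (-1) ^ length bs"
    by (simp only: mdet_cf_matrix)
  then show "is_unit k"
    by (rule dvd_unit_imp_unit) simp
qed

text \<open>Requiring the last partial quotient to be at least 2 makes the expansion of a rational unique.\<close>

definition canonical_cf :: "nat list \<Rightarrow> bool" where
  "canonical_cf bs \<longleftrightarrow> 0 \<notin> set bs \<and> (bs = [] \<or> 2 \<le> last bs)"

lemma canonical_cf_nonzero: "canonical_cf bs \<Longrightarrow> 0 \<notin> set bs"
  by (simp add: canonical_cf_def)

lemma canonical_cf_Cons: "canonical_cf (b # bs) \<longleftrightarrow> b \<noteq> 0 \<and> canonical_cf bs \<and> (bs = [] \<longrightarrow> 2 \<le> b)"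
  by (cases bs) (auto simp: canonical_cf_def)

lemma cf_p_less_cf_q: "canonical_cf bs \<Longrightarrow> cf_p bs < cf_q bs"
proof (induction bs)
  case (Cons b bs)
  have nonneg: "0 \<le> cf_p bs" "cf_p bs \<le> cf_q bs" "1 \<le> cf_q bs"
    using Cons.prems cf_matrix_entries_nonneg[of bs] by (auto simp: canonical_cf_def)
  show ?case
  proof (cases "b = 1")
    case True
    then obtain b' bs' where "bs = b' # bs'" "0 \<notin> set bs'"
      using Cons.prems by (cases bs) (auto simp: canonical_cf_def)
    then have "0 < cf_p bs" using cf_q_pos[of bs'] by simp
    then show ?thesis using True by simp
  next
    case False
    then have "2 * cf_q bs \<le> int b * cf_q bs"
      using Cons.prems nonneg by (intro mult_right_mono) (auto simp: canonical_cf_Cons)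
    then show ?thesis using nonneg by (simp only: cf_matrix_Cons_entries)
  qed
qed simp

text \<open>For \<open>b # u\<close> we have $p = q_u$ and $q = p_u + b\,q_u$ with $0 \le p_u < q_u$, so $b = q \mathbin{div} p$.\<close>

lemma canonical_cf_eqI:
  "canonical_cf u \<Longrightarrow> canonical_cf v \<Longrightarrow> cf_p u = cf_p v \<Longrightarrow> cf_q u = cf_q v \<Longrightarrow> u = v"
proof (induction u arbitrary: v)
  case Nil
  then show ?case
    using cf_q_pos[of "tl v"] by (cases v) (auto simp: canonical_cf_def)
next
  case (Cons b u)
  then obtain b' v' where v: "v = b' # v'"
    using cf_q_pos[of u] by (cases v) (auto simp: canonical_cf_def)
  have canon: "canonical_cf u" "canonical_cf v'"
    using Cons.prems v by (simp_all add: canonical_cf_Cons)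
  have q: "cf_q u = cf_q v'" and pq: "cf_p u + int b * cf_q u = cf_p v' + int b' * cf_q v'"
    using Cons.prems v by simp_all
  have "(cf_p u + int b * cf_q u) div cf_q u = int b"
    "(cf_p v' + int b' * cf_q v') div cf_q v' = int b'"
    using cf_p_less_cf_q[OF canon(1)] cf_p_less_cf_q[OF canon(2)]
      cf_matrix_entries_nonneg[of u] cf_matrix_entries_nonneg[of v'] canon
    by (simp_all add: canonical_cf_def div_pos_pos_trivial)
  then have "b = b'" using q pq by simp
  moreover have "cf_p u = cf_p v'" using q pq \<open>b = b'\<close> by simp
  then have "u = v'" by (rule Cons.IH[OF canon _ q])
  ultimately show ?case using v by simp
qed

lemma canonical_cf_cross_ne:
  assumes "canonical_cf u" "canonical_cf v" "u \<noteq> v"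
  shows "cf_p u * cf_q v \<noteq> cf_q u * cf_p v"
proof
  assume cross: "cf_p u * cf_q v = cf_q u * cf_p v"
  have "cf_q u dvd cf_p u * cf_q v"
    unfolding cross by simp
  moreover have "cf_q v dvd cf_q u * cf_p v"
    unfolding cross[symmetric] by simp
  ultimately have "cf_q u dvd cf_q v" "cf_q v dvd cf_q u"
    using coprime_cf_p_cf_q[of u] coprime_cf_p_cf_q[of v]
    by (simp_all add: coprime_commute coprime_dvd_mult_right_iff coprime_dvd_mult_left_iff)
  moreover have q_pos: "1 \<le> cf_q u" "1 \<le> cf_q v"
    using cf_q_pos canonical_cf_nonzero assms(1,2) by blast+
  ultimately have q: "cf_q u = cf_q v"
    by (simp add: zdvd_antisym_nonneg)
  then have "cf_p u = cf_p v"
    using cross q_pos by (simp add: mult.commute)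
  then show False
    using canonical_cf_eqI[OF assms(1,2) _ q] assms(3) by simp
qed

section \<open>Arithmetic modulo $p$\<close>

lemma red_entries [simp]:
  "m11 (red p x) = m11 x mod int p" "m12 (red p x) = m12 x mod int p"
  "m21 (red p x) = m21 x mod int p" "m22 (red p x) = m22 x mod int p"
  by (cases x rule: prod_cases4; simp)+

lemma red_red [simp]: "red p (red p x) = red p x"
  by (rule mat2_eqI) simp_all

lemma mod_sum_prod_mod_left: "(a mod n * b + c mod n * d) mod n = (a * b + c * d) mod (n::int)"
  by (metis mod_add_eq mod_mult_left_eq)

lemma mod_sum_prod_mod_right: "(a * (b mod n) + c * (d mod n)) mod n = (a * b + c * d) mod (n::int)"
  by (metis mod_add_eq mod_mult_right_eq)

lemma red_mmul_red_left [simp]: "red p (mmul (red p x) y) = red p (mmul x y)"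
  by (rule mat2_eqI) (simp_all add: mod_sum_prod_mod_left)

lemma red_mmul_red_right [simp]: "red p (mmul x (red p y)) = red p (mmul x y)"
  by (rule mat2_eqI) (simp_all add: mod_sum_prod_mod_right)

lemma mod_diff_prod_mod: "(a mod n * (b mod n) - c mod n * (d mod n)) mod n = (a * b - c * d) mod (n::int)"
  by (metis mod_diff_eq mod_mult_eq)

lemma mdet_red_mod: "mdet (red p x) mod int p = mdet x mod int p"
  by (simp add: mdet_def mod_diff_prod_mod)

lemma invp_eq_red_madj: "invp p x = red p (madj x)"
  by (cases x rule: prod_cases4) (simp add: madj_def)

lemma mod_eq_self_iff: "0 < p \<Longrightarrow> t mod int p = t \<longleftrightarrow> t \<in> {0..<int p}"
  by (metis atLeastLessThan_iff mod_pos_pos_trivial of_nat_0_less_iff pos_mod_bound pos_mod_sign)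

lemma SL2_iff: "0 < p \<Longrightarrow> x \<in> SL2 p \<longleftrightarrow> red p x = x \<and> mdet x mod int p = 1 mod int p"
  by (cases x rule: prod_cases4) (auto simp: SL2_def mdet_def mod_eq_self_iff)

lemma red_SL2: "0 < p \<Longrightarrow> x \<in> SL2 p \<Longrightarrow> red p x = x"
  using SL2_iff by blast

lemma mdet_SL2_mod: "0 < p \<Longrightarrow> x \<in> SL2 p \<Longrightarrow> mdet x mod int p = 1 mod int p"
  using SL2_iff by blast

lemma not_dvd_mdet_SL2:
  assumes "prime p" "x \<in> SL2 p"
  shows "\<not> int p dvd mdet x"
proof -
  have "mdet x mod int p = 1 mod int p"
    using mdet_SL2_mod[OF prime_gt_0_nat[OF assms(1)] assms(2)] .
  also have "1 mod int p = 1"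
    using prime_gt_1_nat[OF assms(1)] by simp
  finally show ?thesis
    by (simp add: dvd_eq_mod_eq_0)
qed

lemma red_in_SL2: "0 < p \<Longrightarrow> mdet x = 1 \<Longrightarrow> red p x \<in> SL2 p"
  using SL2_iff[of p "red p x"] mdet_red_mod[of p x] by simp

lemma mulp_in_SL2: "0 < p \<Longrightarrow> x \<in> SL2 p \<Longrightarrow> y \<in> SL2 p \<Longrightarrow> mulp p x y \<in> SL2 p"
  unfolding SL2_iff mulp_def
  by (metis mdet_mmul mdet_red_mod mod_mult_eq mult_1 red_red)

lemma invp_in_SL2: "0 < p \<Longrightarrow> x \<in> SL2 p \<Longrightarrow> invp p x \<in> SL2 p"
  unfolding SL2_iff invp_eq_red_madj
  by (simp add: mdet_red_mod) (simp add: mdet_def mult.commute)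

lemma SL2_subset: "SL2 p \<subseteq> {0..<int p} \<times> {0..<int p} \<times> {0..<int p} \<times> {0..<int p}"
  unfolding SL2_def by auto

lemma finite_SL2: "finite (SL2 p)"
  using SL2_subset by (rule finite_subset) simp

lemma borel_subset_SL2: "borel p \<subseteq> SL2 p"
  unfolding borel_def by auto

lemma finite_borel: "finite (borel p)"
  using finite_SL2 borel_subset_SL2 by (rule finite_subset[rotated])

lemma SL2_eqI_mod:
  assumes "0 < p" "x \<in> SL2 p" "y \<in> SL2 p"
    and "int p dvd m11 x - m11 y" "int p dvd m12 x - m12 y"
    and "int p dvd m21 x - m21 y" "int p dvd m22 x - m22 y"
  shows "x = y"
proof -
  have "red p x = red p y"
    using assms(4-) by (intro mat2_eqI) (simp_all add: mod_eq_dvd_iff)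
  then show ?thesis
    using red_SL2 assms(1-3) by metis
qed

lemma exists_inverse_mod_prime:
  assumes "prime p" "a \<in> {1..<int p}"
  shows "\<exists>d. d \<in> {0..<int p} \<and> (a * d) mod int p = 1"
proof -
  have "\<not> int p dvd a"
    using assms(2) zdvd_not_zless by auto
  then have "coprime (int p) a"
    using assms(1) by (intro prime_imp_coprime) simp_all
  then have "gcd a (int p) = 1"
    by (simp add: coprime_commute)
  then obtain u v where uv: "u * a + v * int p = 1"
    using bezout_int[of a "int p"] by auto
  have "a * u = 1 + (- v) * int p"
    using uv by (simp add: algebra_simps)
  then have "(a * (u mod int p)) mod int p = (1 + (- v) * int p) mod int p"
    by (metis mod_mult_right_eq)
  also have "\<dots> = 1 mod int p"
    by (rule mod_mult_self1)
  also have "\<dots> = 1"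
    using prime_gt_1_nat[OF assms(1)] by simp
  finally show ?thesis
    using prime_gt_0_nat[OF assms(1)] by (intro exI[of _ "u mod int p"]) simp
qed

lemma card_borel_ge:
  assumes "prime p"
  shows "p * (p - 1) \<le> card (borel p)"
proof -
  define inv where "inv a = (SOME d. d \<in> {0..<int p} \<and> (a * d) mod int p = 1)" for a
  have inv: "inv a \<in> {0..<int p} \<and> (a * inv a) mod int p = 1" if "a \<in> {1..<int p}" for a
    unfolding inv_def by (rule someI_ex[OF exists_inverse_mod_prime[OF assms that]])
  define S where "S = {1..<int p} \<times> {0..<int p}"
  define f :: "int \<times> int \<Rightarrow> mat2" where "f = (\<lambda>(a, t). (a, t, 0, inv a))"
  have "f (a, t) \<in> borel p" if "(a, t) \<in> S" for a t
    using inv[of a] that prime_gt_1_nat[OF assms] by (simp add: S_def f_def borel_def SL2_def)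
  then have sub: "f ` S \<subseteq> borel p"
    by auto
  have "inj_on f S"
    by (rule inj_onI) (auto simp: f_def)
  then have "card S = card (f ` S)"
    by (simp add: card_image)
  also have "\<dots> \<le> card (borel p)"
    by (rule card_mono[OF finite_borel sub])
  finally have "card S \<le> card (borel p)" .
  then show ?thesis
    using prime_gt_1_nat[OF assms] by (simp add: S_def card_cartesian_product nat_diff_distrib mult.commute)
qed

definition zero_mod :: "nat \<Rightarrow> int \<times> int \<Rightarrow> bool" where
  "zero_mod p v \<longleftrightarrow> int p dvd fst v \<and> int p dvd snd v"

definition indep_mod :: "nat \<Rightarrow> int \<times> int \<Rightarrow> int \<times> int \<Rightarrow> bool" where
  "indep_mod p u v \<longleftrightarrow> \<not> int p dvd det2 u v"

lemma indep_mod_imp_nonzero: "indep_mod p u v \<Longrightarrow> \<not> zero_mod p u"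
  by (auto simp: indep_mod_def zero_mod_def det2_def)

text \<open>Cramer's rule: $y_1 \det(u,v) = (y\cdot u) v_2 - (y\cdot v) u_2$ and similarly for $y_2$.\<close>

lemma zero_mod_if_dvd_dot_indep:
  assumes "prime p" "int p dvd dot y u" "int p dvd dot y v" "indep_mod p u v"
  shows "zero_mod p y"
proof -
  have prime: "prime (int p)" using assms(1) by simp
  have "fst y * det2 u v = dot y u * snd v - dot y v * snd u"
    "snd y * det2 u v = dot y v * fst u - dot y u * fst v"
    by (simp_all add: dot_def det2_def algebra_simps)
  then have "int p dvd fst y * det2 u v" "int p dvd snd y * det2 u v"
    using assms(2,3) by simp_all
  then show ?thesis
    using assms(4) prime by (simp add: zero_mod_def indep_mod_def prime_dvd_mult_iff)
qed

lemma zero_mod_of_zero_mod_mv: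
  assumes "prime p" "x \<in> SL2 p" "zero_mod p (mv x v)"
  shows "zero_mod p v"
proof -
  have "fst v * mdet x = m22 x * fst (mv x v) - m12 x * snd (mv x v)"
    "snd v * mdet x = m11 x * snd (mv x v) - m21 x * fst (mv x v)"
    by (simp_all add: mv_def mdet_def algebra_simps)
  then have "int p dvd fst v * mdet x" "int p dvd snd v * mdet x"
    using assms(3) by (simp_all add: zero_mod_def)
  moreover have "prime (int p)"
    using assms(1) by simp
  ultimately show ?thesis
    using not_dvd_mdet_SL2[OF assms(1,2)] by (simp add: zero_mod_def prime_dvd_mult_iff)
qed

definition line_mod :: "nat \<Rightarrow> int \<times> int \<Rightarrow> (int \<times> int) set" where
  "line_mod p r = {v \<in> {0..<int p} \<times> {0..<int p}. v \<noteq> (0, 0) \<and> int p dvd dot r v}"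

lemma line_mod_swap: "line_mod p (prod.swap r) = prod.swap ` line_mod p r"
  by (auto simp: line_mod_def dot_def add.commute image_iff)

lemma residues_eq_if_dvd: "a \<in> {0..<int p} \<Longrightarrow> b \<in> {0..<int p} \<Longrightarrow> int p dvd a - b \<Longrightarrow> a = b"
  by (metis atLeastLessThan_iff mod_eq_dvd_iff mod_pos_pos_trivial)

lemma card_line_mod_le_if_not_dvd_snd:
  assumes "prime p" "\<not> int p dvd snd r"
  shows "card (line_mod p r) \<le> p - 1"
proof -
  have prime: "prime (int p)" using assms(1) by simp
  have snd_eq: "snd v = snd v'"
    if "v \<in> {0..<int p} \<times> {0..<int p}" "v' \<in> {0..<int p} \<times> {0..<int p}"
      "int p dvd dot r v" "int p dvd dot r v'" "fst v = fst v'" for v v'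
  proof -
    have "snd r * (snd v - snd v') = dot r v - dot r v'"
      using that(5) by (simp add: dot_def algebra_simps)
    then have "int p dvd snd r * (snd v - snd v')"
      using that(3,4) by simp
    then have "int p dvd snd v - snd v'"
      using assms(2) prime by (simp add: prime_dvd_mult_iff)
    then show ?thesis
      using that(1,2) by (intro residues_eq_if_dvd) (simp_all add: mem_Times_iff)
  qed
  have "inj_on fst (line_mod p r)"
  proof (rule inj_onI)
    fix v v' assume "v \<in> line_mod p r" "v' \<in> line_mod p r" "fst v = fst v'"
    then show "v = v'" using snd_eq[of v v'] by (simp add: line_mod_def prod_eq_iff)
  qed
  moreover have "fst v \<in> {1..<int p}" if v: "v \<in> line_mod p r" for v
  proof -
    have "fst v \<noteq> 0"
    proof
      assume "fst v = 0"
      then have "snd v = 0"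
        using snd_eq[of v "(0, 0)"] v prime_gt_0_nat[OF assms(1)] by (simp add: line_mod_def dot_def)
      with \<open>fst v = 0\<close> v show False by (simp add: line_mod_def prod_eq_iff)
    qed
    then show ?thesis using v by (auto simp: line_mod_def)
  qed
  ultimately have "card (line_mod p r) \<le> card {1..<int p}"
    by (intro card_inj_on_le) auto
  then show ?thesis by simp
qed

lemma card_line_mod_le:
  assumes "prime p" "\<not> zero_mod p r"
  shows "card (line_mod p r) \<le> p - 1"
proof (cases "int p dvd snd r")
  case True
  then have "\<not> int p dvd snd (prod.swap r)"
    using assms(2) by (simp add: zero_mod_def)
  then have "card (line_mod p (prod.swap r)) \<le> p - 1"
    by (rule card_line_mod_le_if_not_dvd_snd[OF assms(1)])
  moreover have "card (line_mod p (prod.swap r)) = card (line_mod p r)"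
    unfolding line_mod_swap by (rule card_image) simp
  ultimately show ?thesis
    by simp
qed (rule card_line_mod_le_if_not_dvd_snd[OF assms(1)])

lemma finite_line_mod: "finite (line_mod p r)"
  by (rule finite_subset[of _ "{0..<int p} \<times> {0..<int p}"]) (auto simp: line_mod_def)

definition vec_mod :: "nat \<Rightarrow> int \<times> int \<Rightarrow> int \<times> int" where
  "vec_mod p v = (fst v mod int p, snd v mod int p)"

lemma vec_mod_eq_iff: "vec_mod p u = vec_mod p v \<longleftrightarrow> zero_mod p (u - v)"
  by (simp add: vec_mod_def zero_mod_def mod_eq_dvd_iff)

lemma vec_mod_in_line_mod:
  assumes "0 < p" "\<not> zero_mod p v" "int p dvd dot r v"
  shows "vec_mod p v \<in> line_mod p r"
proof -
  have "dot r (vec_mod p v) mod int p = dot r v mod int p"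
    by (simp add: vec_mod_def dot_def mod_sum_prod_mod_right)
  then have "int p dvd dot r (vec_mod p v)"
    using assms(3) by (simp add: dvd_eq_mod_eq_0)
  moreover have "vec_mod p v \<noteq> (0, 0)"
    using assms(2) by (auto simp: vec_mod_def zero_mod_def dvd_eq_mod_eq_0)
  ultimately show ?thesis
    using assms(1) by (simp add: line_mod_def vec_mod_def)
qed

section \<open>Translates of the Borel subgroup\<close>

definition borel_translate :: "nat \<Rightarrow> mat2 \<Rightarrow> mat2 \<Rightarrow> mat2 set" where
  "borel_translate p g h = (\<lambda>b. mulp p (mulp p g b) h) ` borel p"

lemma red_mmul_cong: "red p x = red p x' \<Longrightarrow> red p y = red p y' \<Longrightarrow> red p (mmul x y) = red p (mmul x' y')"
  by (metis red_mmul_red_left red_mmul_red_right)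

lemma mod_mult_units: "d mod n = 1 mod n \<Longrightarrow> e mod n = 1 mod n \<Longrightarrow> (d * y * e) mod n = y mod (n::int)"
  by (metis mod_mult_left_eq mod_mult_right_eq mult_1 mult_1_right)

lemma red_madj_mulp_mulp:
  assumes "0 < p" "g \<in> SL2 p" "h \<in> SL2 p"
  shows "red p (mmul (mmul (madj g) (mulp p (mulp p g b) h)) (madj h)) = red p b"
proof -
  have "red p (mmul (mmul (madj g) (mulp p (mulp p g b) h)) (madj h))
      = red p (mmul (mmul (madj g) (mmul (mmul g b) h)) (madj h))"
    unfolding mulp_def by (intro red_mmul_cong refl) simp
  also have "mmul (mmul (madj g) (mmul (mmul g b) h)) (madj h)
      = mmul (mmul (mmul (madj g) g) b) (mmul h (madj h))"
    by (simp add: mmul_assoc)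
  also have "red p \<dots> = red p b"
    using mdet_SL2_mod[OF assms(1,2)] mdet_SL2_mod[OF assms(1,3)]
    by (intro mat2_eqI) (simp_all add: mmul_madj_left mmul_madj_right mod_mult_units)
  finally show ?thesis .
qed

lemma card_borel_translate:
  assumes "0 < p" "g \<in> SL2 p" "h \<in> SL2 p"
  shows "card (borel_translate p g h) = card (borel p)"
  unfolding borel_translate_def
proof (rule card_image, rule inj_onI)
  fix b b' assume "b \<in> borel p" "b' \<in> borel p" "mulp p (mulp p g b) h = mulp p (mulp p g b') h"
  then show "b = b'"
    using red_madj_mulp_mulp[OF assms] red_SL2[OF assms(1)] borel_subset_SL2 by (metis subsetD)
qed

lemma borel_translate_subset_SL2:
  "0 < p \<Longrightarrow> g \<in> SL2 p \<Longrightarrow> h \<in> SL2 p \<Longrightarrow> borel_translate p g h \<subseteq> SL2 p"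
  unfolding borel_translate_def using borel_subset_SL2 mulp_in_SL2 by blast

lemma finite_borel_translate: "finite (borel_translate p g h)"
  unfolding borel_translate_def using finite_borel by simp

lemma borel_translate_subset_prod3:
  "g \<in> X \<Longrightarrow> h \<in> Z \<Longrightarrow> borel_translate p g h \<subseteq> prod3 p X (borel p) Z"
  unfolding borel_translate_def prod3_def by blast

lemma finite_prod3: "0 < p \<Longrightarrow> finite (prod3 p X Y Z)"
proof -
  assume "0 < p"
  then have "red p x \<in> {0..<int p} \<times> {0..<int p} \<times> {0..<int p} \<times> {0..<int p}" for x
    by (cases x rule: prod_cases4) simp
  then have "prod3 p X Y Z \<subseteq> {0..<int p} \<times> {0..<int p} \<times> {0..<int p} \<times> {0..<int p}"
    unfolding prod3_def mulp_def by blast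
  then show ?thesis
    by (rule finite_subset) simp
qed

text \<open>\<open>adj_row2 g\<close> is the second row of $g^{-1}$ and \<open>adj_col1 h\<close> the first column of
  $h^{-1}$, so that \<open>bilin (adj_row2 g) x (adj_col1 h)\<close> is the lower left entry of $g^{-1} x h^{-1}$.\<close>

definition adj_row2 :: "mat2 \<Rightarrow> int \<times> int" where
  "adj_row2 g = (- m21 g, m11 g)"

definition adj_col1 :: "mat2 \<Rightarrow> int \<times> int" where
  "adj_col1 h = (m22 h, - m21 h)"

definition bilin :: "int \<times> int \<Rightarrow> mat2 \<Rightarrow> int \<times> int \<Rightarrow> int" where
  "bilin r x c = dot r (mv x c)"

lemma dvd_bilin_if_mem_borel_translate:
  assumes "0 < p" "g \<in> SL2 p" "h \<in> SL2 p" "x \<in> borel_translate p g h"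
  shows "int p dvd bilin (adj_row2 g) x (adj_col1 h)"
proof -
  obtain b where b: "b \<in> borel p" "x = mulp p (mulp p g b) h"
    using assms(4) unfolding borel_translate_def by auto
  have "m21 (red p (mmul (mmul (madj g) x) (madj h))) = m21 (red p b)"
    using red_madj_mulp_mulp[OF assms(1-3), of b] b(2) by simp
  then have "m21 (mmul (mmul (madj g) x) (madj h)) mod int p = m21 b mod int p"
    by simp
  moreover have "m21 b = 0"
    using b(1) by (simp add: borel_def m21_def)
  moreover have "m21 (mmul (mmul (madj g) x) (madj h)) = bilin (adj_row2 g) x (adj_col1 h)"
    by (simp add: bilin_def adj_row2_def adj_col1_def dot_def mv_def algebra_simps)
  ultimately show ?thesis
    by (simp add: dvd_eq_mod_eq_0)
qed

lemma not_zero_mod_adj_row2: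
  assumes "prime p" "g \<in> SL2 p"
  shows "\<not> zero_mod p (adj_row2 g)"
proof
  assume "zero_mod p (adj_row2 g)"
  then have "int p dvd m11 g * m22 g - m12 g * m21 g"
    by (simp add: zero_mod_def adj_row2_def)
  then show False
    using not_dvd_mdet_SL2[OF assms] by (simp add: mdet_def)
qed

lemma not_zero_mod_adj_col1:
  assumes "prime p" "h \<in> SL2 p"
  shows "\<not> zero_mod p (adj_col1 h)"
proof
  assume "zero_mod p (adj_col1 h)"
  then have "int p dvd m11 h * m22 h - m12 h * m21 h"
    by (simp add: zero_mod_def adj_col1_def)
  then show False
    using not_dvd_mdet_SL2[OF assms] by (simp add: mdet_def)
qed

definition common_zeros :: "nat \<Rightarrow> int \<times> int \<Rightarrow> int \<times> int \<Rightarrow> int \<times> int \<Rightarrow> int \<times> int \<Rightarrow> mat2 set" where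
  "common_zeros p r c r' c' = {x \<in> SL2 p. int p dvd bilin r x c \<and> int p dvd bilin r' x c'}"

lemma indep_mod_mv:
  assumes "prime p" "x \<in> SL2 p" "indep_mod p c c'"
  shows "indep_mod p (mv x c) (mv x c')"
proof -
  have "prime (int p)"
    using assms(1) by simp
  then show ?thesis
    using assms(3) not_dvd_mdet_SL2[OF assms(1,2)] by (simp add: indep_mod_def det2_mv prime_dvd_mult_iff)
qed

lemma common_zeros_same_row:
  assumes "prime p" "\<not> zero_mod p r" "indep_mod p c c'"
  shows "common_zeros p r c r c' = {}"
proof (rule ccontr)
  assume "common_zeros p r c r c' \<noteq> {}"
  then obtain x where x: "x \<in> SL2 p" "int p dvd dot r (mv x c)" "int p dvd dot r (mv x c')"
    unfolding common_zeros_def bilin_def by auto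
  then have "zero_mod p r"
    by (intro zero_mod_if_dvd_dot_indep[OF assms(1) x(2,3) indep_mod_mv[OF assms(1) x(1) assms(3)]])
  then show False using assms(2) by blast
qed

lemma common_zeros_same_col:
  assumes "prime p" "\<not> zero_mod p c" "indep_mod p r r'"
  shows "common_zeros p r c r' c = {}"
proof (rule ccontr)
  assume "common_zeros p r c r' c \<noteq> {}"
  then obtain x where x: "x \<in> SL2 p" "int p dvd dot (mv x c) r" "int p dvd dot (mv x c) r'"
    unfolding common_zeros_def bilin_def by (auto simp: dot_commute)
  then have "zero_mod p (mv x c)"
    by (intro zero_mod_if_dvd_dot_indep[OF assms(1) x(2,3) assms(3)])
  then show False
    using zero_mod_of_zero_mod_mv[OF assms(1) x(1)] assms(2) by blast
qed

lemma mv_diff: "mv x c - mv y c = mv (x - y) c"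
  by (simp add: mv_def m11_def m12_def m21_def m22_def prod_eq_iff algebra_simps)

lemma eq_if_zero_mod_mv_diff:
  assumes "prime p" "x \<in> SL2 p" "y \<in> SL2 p" "indep_mod p c c'"
    and "zero_mod p (mv (x - y) c)" "zero_mod p (mv (x - y) c')"
  shows "x = y"
proof -
  have "zero_mod p (m11 (x - y), m12 (x - y))"
    by (rule zero_mod_if_dvd_dot_indep[OF assms(1) _ _ assms(4)])
      (use assms(5,6) in \<open>simp_all add: zero_mod_def mv_def dot_def\<close>)
  moreover have "zero_mod p (m21 (x - y), m22 (x - y))"
    by (rule zero_mod_if_dvd_dot_indep[OF assms(1) _ _ assms(4)])
      (use assms(5,6) in \<open>simp_all add: zero_mod_def mv_def dot_def\<close>)
  ultimately show ?thesis
    using prime_gt_0_nat[OF assms(1)] assms(2,3)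
    by (intro SL2_eqI_mod) (auto simp: zero_mod_def m11_def m12_def m21_def m22_def)
qed

text \<open>An element $x$ of the intersection is determined by $x c$ modulo $p$: the congruences
  $\det(xc, xc') \equiv \det(c, c')$ and $r' \cdot xc' \equiv 0$ pin down $xc'$ once $xc$ is known.\<close>

lemma zero_mod_mv_diff_second:
  assumes "prime p" "x \<in> SL2 p" "x' \<in> SL2 p" "indep_mod p r r'"
    and "int p dvd dot r (mv x c)" "int p dvd dot r' (mv x c')" "int p dvd dot r' (mv x' c')"
    and "zero_mod p (mv x c - mv x' c)" "\<not> zero_mod p (mv x c)"
  shows "zero_mod p (mv x c' - mv x' c')"
proof -
  define w where "w = mv x c"
  define w' where "w' = mv x' c"
  define z where "z = mv x c'"
  define z' where "z' = mv x' c'"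
  have "int p dvd mdet x - 1" "int p dvd mdet x' - 1"
    using mdet_SL2_mod[OF prime_gt_0_nat[OF assms(1)]] assms(2,3) by (simp_all add: mod_eq_dvd_iff)
  moreover have "det2 w z - det2 w' z' = (mdet x - 1) * det2 c c' - (mdet x' - 1) * det2 c c'"
    unfolding w_def z_def w'_def z'_def det2_mv by (simp add: algebra_simps)
  ultimately have det_zz': "int p dvd det2 w z - det2 w' z'"
    by simp
  have "det2 w z' - det2 w' z' = fst (w - w') * snd z' - snd (w - w') * fst z'"
    by (simp add: det2_def algebra_simps)
  then have det_z': "int p dvd det2 w z' - det2 w' z'"
    using assms(8) by (simp add: zero_mod_def w_def w'_def)
  have "dot (z - z') (- snd w, fst w) = (det2 w z - det2 w' z') - (det2 w z' - det2 w' z')"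
    by (simp add: dot_def det2_def algebra_simps)
  then have dvd_w: "int p dvd dot (z - z') (- snd w, fst w)"
    using det_zz' det_z' by (metis dvd_diff)
  have dvd_r': "int p dvd dot (z - z') r'"
    using assms(6,7) by (simp add: z_def z'_def dot_def algebra_simps)
  have "\<not> int p dvd dot r' w"
    using zero_mod_if_dvd_dot_indep[OF assms(1), of w r r'] assms(4,5,9)
    by (auto simp: w_def dot_commute)
  moreover have "det2 (- snd w, fst w) r' = - dot r' w"
    by (simp add: det2_def dot_def algebra_simps)
  ultimately have "indep_mod p (- snd w, fst w) r'"
    by (simp add: indep_mod_def)
  then show ?thesis
    using zero_mod_if_dvd_dot_indep[OF assms(1) dvd_w dvd_r'] by (simp add: z_def z'_def)
qed

lemma card_common_zeros_le:
  assumes "prime p" "indep_mod p r r'" "indep_mod p c c'"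
  shows "card (common_zeros p r c r' c') \<le> p - 1"
proof -
  let ?f = "\<lambda>x. vec_mod p (mv x c)"
  have nonzero: "\<not> zero_mod p (mv x c)" if "x \<in> SL2 p" for x
    using zero_mod_of_zero_mod_mv[OF assms(1) that] indep_mod_imp_nonzero[OF assms(3)] by blast
  have sub: "?f ` common_zeros p r c r' c' \<subseteq> line_mod p r"
  proof (rule image_subsetI)
    fix x assume "x \<in> common_zeros p r c r' c'"
    then show "?f x \<in> line_mod p r"
      using nonzero by (intro vec_mod_in_line_mod[OF prime_gt_0_nat[OF assms(1)]])
        (simp_all add: common_zeros_def bilin_def)
  qed
  have inj: "inj_on ?f (common_zeros p r c r' c')"
  proof (rule inj_onI)
    fix x x' assume x: "x \<in> common_zeros p r c r' c'" and x': "x' \<in> common_zeros p r c r' c'"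
      and "?f x = ?f x'"
    then have diff_c: "zero_mod p (mv x c - mv x' c)"
      by (simp add: vec_mod_eq_iff)
    have SL2: "x \<in> SL2 p" "x' \<in> SL2 p"
      using x x' by (simp_all add: common_zeros_def)
    have "zero_mod p (mv x c' - mv x' c')"
      by (rule zero_mod_mv_diff_second[OF assms(1) SL2 assms(2) _ _ _ diff_c nonzero[OF SL2(1)]])
        (use x x' in \<open>simp_all add: common_zeros_def bilin_def\<close>)
    then show "x = x'"
      using eq_if_zero_mod_mv_diff[OF assms(1) SL2 assms(3)] diff_c by (simp add: mv_diff)
  qed
  have "card (common_zeros p r c r' c') \<le> card (line_mod p r)"
    by (rule card_inj_on_le[OF inj sub finite_line_mod])
  also have "\<dots> \<le> p - 1"
    using card_line_mod_le[OF assms(1) indep_mod_imp_nonzero[OF assms(2)]] .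
  finally show ?thesis .
qed

lemma card_borel_translate_Int_le:
  assumes "prime p" "g1 \<in> SL2 p" "g2 \<in> SL2 p" "h1 \<in> SL2 p" "h2 \<in> SL2 p" "(g1, h1) \<noteq> (g2, h2)"
    and "g1 \<noteq> g2 \<Longrightarrow> indep_mod p (adj_row2 g1) (adj_row2 g2)"
    and "h1 \<noteq> h2 \<Longrightarrow> indep_mod p (adj_col1 h1) (adj_col1 h2)"
  shows "card (borel_translate p g1 h1 \<inter> borel_translate p g2 h2) \<le> p - 1"
proof -
  let ?S = "common_zeros p (adj_row2 g1) (adj_col1 h1) (adj_row2 g2) (adj_col1 h2)"
  have p: "0 < p" using assms(1) by (rule prime_gt_0_nat)
  have "borel_translate p g1 h1 \<inter> borel_translate p g2 h2 \<subseteq> ?S"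
    using borel_translate_subset_SL2[OF p] dvd_bilin_if_mem_borel_translate[OF p] assms(2-5)
    unfolding common_zeros_def by blast
  moreover have "card ?S \<le> p - 1"
  proof (cases "g1 = g2")
    case True
    then show ?thesis
      using common_zeros_same_row[OF assms(1) not_zero_mod_adj_row2[OF assms(1,2)]] assms(6,8) by simp
  next
    case False
    show ?thesis
    proof (cases "h1 = h2")
      case True
      then show ?thesis
        using common_zeros_same_col[OF assms(1) not_zero_mod_adj_col1[OF assms(1,4)]] assms(7) False
        by simp
    qed (use card_common_zeros_le[OF assms(1)] assms(7,8) False in blast)
  qed
  moreover have "finite ?S"
    using finite_SL2 by (simp add: common_zeros_def)
  ultimately show ?thesis
    using card_mono le_trans by blast
qed

lemma card_UN_ge_bonferroni:
  assumes "finite I" "\<And>i. i \<in> I \<Longrightarrow> finite (T i)" "\<And>i. i \<in> I \<Longrightarrow> L \<le> card (T i)"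
    and "\<And>i j. i \<in> I \<Longrightarrow> j \<in> I \<Longrightarrow> i \<noteq> j \<Longrightarrow> card (T i \<inter> T j) \<le> K"
  shows "real (card I) * L - real (card I) * (real (card I) - 1) / 2 * K \<le> real (card (\<Union>i\<in>I. T i))"
  using assms
proof (induction I rule: finite_induct)
  case (insert k I)
  define U where "U = (\<Union>i\<in>I. T i)"
  define n where "n = real (card I)"
  have IH: "n * L - n * (n - 1) / 2 * K \<le> real (card U)"
    unfolding U_def n_def using insert by simp
  have "card (T k \<inter> U) \<le> (\<Sum>i\<in>I. card (T k \<inter> T i))"
    unfolding U_def Int_UN_distrib using insert.hyps(1) by (rule card_UN_le)
  also have "\<dots> \<le> (\<Sum>i\<in>I. K)"
    using insert by (intro sum_mono) (metis insertCI)
  finally have "real (card (T k \<inter> U)) \<le> n * K"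
    by (simp add: n_def flip: of_nat_mult)
  moreover have "card (T k \<union> U) + card (T k \<inter> U) = card (T k) + card U"
    by (rule card_Un_Int[symmetric]) (use insert in \<open>auto simp: U_def\<close>)
  moreover have "L \<le> card (T k)"
    using insert.prems(2) by simp
  ultimately have "L + (n * L - n * (n - 1) / 2 * K) - n * K \<le> real (card (T k \<union> U))"
    using IH by (simp add: of_nat_add[symmetric] del: of_nat_add)
  moreover have "L + (n * L - n * (n - 1) / 2 * K) - n * K = (n + 1) * L - (n + 1) * n / 2 * K"
    by (simp add: field_simps)
  moreover have "real (card (insert k I)) = n + 1"
    using insert.hyps by (simp add: n_def)
  ultimately show ?case
    by (simp add: U_def)
qed simp

definition pairwise_indep_mod :: "nat \<Rightarrow> (mat2 \<Rightarrow> int \<times> int) \<Rightarrow> mat2 set \<Rightarrow> bool" where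
  "pairwise_indep_mod p v S \<longleftrightarrow> (\<forall>x\<in>S. \<forall>y\<in>S. x \<noteq> y \<longrightarrow> indep_mod p (v x) (v y))"

lemma bonferroni_bound_ge:
  fixes n q :: real
  assumes "0 \<le> n" "n \<le> q" "2 \<le> q"
  shows "n * q ^ 2 / 4 \<le> n * (q * (q - 1)) - n * (n - 1) / 2 * (q - 1)"
proof -
  have "2 * 2 \<le> q * q"
    using assms(3) by (intro mult_mono) auto
  then have "q ^ 2 / 4 \<le> (q - 1) * ((q + 1) / 2)"
    by (simp add: power2_eq_square algebra_simps)
  also have "\<dots> \<le> (q - 1) * (q - (n - 1) / 2)"
    using assms(2,3) by (intro mult_left_mono) (simp_all add: field_simps)
  finally have "n * (q ^ 2 / 4) \<le> n * ((q - 1) * (q - (n - 1) / 2))"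
    using assms(1) by (rule mult_left_mono)
  then show ?thesis
    by (simp add: algebra_simps)
qed

lemma card_UN_borel_translate_ge:
  assumes "prime p" "G \<subseteq> SL2 p" "H \<subseteq> SL2 p" "finite G" "finite H"
    and "pairwise_indep_mod p adj_row2 G" "pairwise_indep_mod p adj_col1 H"
  shows "real (card (G \<times> H)) * real (p * (p - 1))
      - real (card (G \<times> H)) * (real (card (G \<times> H)) - 1) / 2 * real (p - 1)
    \<le> real (card (\<Union>(g, h)\<in>G \<times> H. borel_translate p g h))"
proof (rule card_UN_ge_bonferroni)
  show "finite (G \<times> H)"
    using assms(4,5) by simp
  fix i assume "i \<in> G \<times> H"
  then obtain g h where i: "i = (g, h)" "g \<in> SL2 p" "h \<in> SL2 p"
    using assms(2,3) by blast
  show "finite (case i of (g, h) \<Rightarrow> borel_translate p g h)"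
    by (simp add: i finite_borel_translate)
  show "p * (p - 1) \<le> card (case i of (g, h) \<Rightarrow> borel_translate p g h)"
    using card_borel_translate[OF prime_gt_0_nat[OF assms(1)] i(2,3)] card_borel_ge[OF assms(1)]
    by (simp add: i)
next
  fix i j assume "i \<in> G \<times> H" "j \<in> G \<times> H" "i \<noteq> j"
  then obtain g1 h1 g2 h2 where ij: "i = (g1, h1)" "j = (g2, h2)"
    "g1 \<in> G" "h1 \<in> H" "g2 \<in> G" "h2 \<in> H" "(g1, h1) \<noteq> (g2, h2)"
    by blast
  have "card (borel_translate p g1 h1 \<inter> borel_translate p g2 h2) \<le> p - 1"
    by (rule card_borel_translate_Int_le[OF assms(1) _ _ _ _ ij(7)])
      (use ij(3-6) assms(2,3,6,7) in \<open>auto simp: pairwise_indep_mod_def\<close>)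
  then show "card ((case i of (g, h) \<Rightarrow> borel_translate p g h) \<inter> (case j of (g, h) \<Rightarrow> borel_translate p g h))
      \<le> p - 1"
    by (simp add: ij(1,2))
qed

lemma card_prod3_borel_ge:
  assumes "prime p" "G \<subseteq> X \<inter> SL2 p" "H \<subseteq> Z \<inter> SL2 p" "finite G" "finite H"
    and "pairwise_indep_mod p adj_row2 G" "pairwise_indep_mod p adj_col1 H"
    and "card G * card H \<le> p"
  shows "real (card G * card H) * real p ^ 2 / 4 \<le> real (card (prod3 p X (borel p) Z))"
proof -
  define n where "n = real (card G * card H)"
  have p: "0 < p" "2 \<le> p"
    using assms(1) by (simp_all add: prime_gt_0_nat prime_ge_2_nat)
  have "(\<Union>(g, h)\<in>G \<times> H. borel_translate p g h) \<subseteq> prod3 p X (borel p) Z"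
    using borel_translate_subset_prod3 assms(2,3) by blast
  then have "real (card (\<Union>(g, h)\<in>G \<times> H. borel_translate p g h)) \<le> real (card (prod3 p X (borel p) Z))"
    by (intro of_nat_mono card_mono finite_prod3[OF p(1)])
  moreover have "n * (real p * (real p - 1)) - n * (n - 1) / 2 * (real p - 1)
      \<le> real (card (\<Union>(g, h)\<in>G \<times> H. borel_translate p g h))"
    using card_UN_borel_translate_ge[of p G H] assms p(1)
    by (simp add: n_def card_cartesian_product of_nat_diff)
  moreover have "n * real p ^ 2 / 4 \<le> n * (real p * (real p - 1)) - n * (n - 1) / 2 * (real p - 1)"
    using assms(8) p(2) unfolding n_def by (intro bonferroni_bound_ge) (simp_all only: of_nat_le_iff)
  ultimately show ?thesis
    unfolding n_def by linarith
qed

section \<open>Continued fractions with small denominators\<close>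

lemma two_pow_length_le_weight: "0 \<notin> set bs \<Longrightarrow> 2 ^ length bs \<le> weight bs"
proof (induction bs)
  case (Cons b bs)
  then have "2 * 2 ^ length bs \<le> (b + 1) * weight bs"
    by (intro mult_mono) auto
  then show ?case by simp
qed simp

definition small_words :: "nat \<Rightarrow> nat list set" where
  "small_words X = {bs. set bs \<subseteq> {1, 2, 3} \<and> even (length bs) \<and> weight bs \<le> X}"

lemma finite_small_words: "finite (small_words X)"
proof (rule finite_subset)
  show "small_words X \<subseteq> {bs. set bs \<subseteq> {1, 2, 3} \<and> length bs \<le> X}"
  proof clarify
    fix bs assume bs: "bs \<in> small_words X"
    then have "0 \<notin> set bs"
      by (auto simp: small_words_def)
    then have "length bs < weight bs"
      using two_pow_length_le_weight[of bs] less_exp[of "length bs"] by linarith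
    then show "set bs \<subseteq> {1, 2, 3} \<and> length bs \<le> X"
      using bs by (simp add: small_words_def)
  qed
qed (rule finite_lists_length_le, simp)

lemma Cons2_in_small_words:
  assumes "a \<in> {1, 2, 3}" "b \<in> {1, 2, 3}" "bs \<in> small_words (X div ((a + 1) * (b + 1)))"
  shows "a # b # bs \<in> small_words X"
proof -
  have "(a + 1) * (b + 1) * weight bs \<le> (a + 1) * (b + 1) * (X div ((a + 1) * (b + 1)))"
    using assms(3) by (intro mult_le_mono2) (simp add: small_words_def)
  also have "\<dots> \<le> X"
    by (rule times_div_less_eq_dividend)
  finally have "weight (a # b # bs) \<le> X"
    by (simp only: weight_simps mult.assoc)
  then show ?thesis
    using assms by (simp add: small_words_def)
qed

lemma real_div_plus_one_ge: "0 < m \<Longrightarrow> (real X + 1) / real m \<le> real (X div m) + 1"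
proof -
  assume "0 < m"
  then have "X mod m < m"
    by simp
  then have "X + 1 \<le> m * (X div m) + m"
    using mult_div_mod_eq[of m X] by linarith
  then have "X + 1 \<le> m * (X div m + 1)"
    by (simp add: distrib_left)
  then have "real X + 1 \<le> real m * (real (X div m) + 1)"
    by (metis of_nat_1 of_nat_add of_nat_le_iff of_nat_mult)
  with \<open>0 < m\<close> show ?thesis
    by (simp add: divide_le_eq mult.commute)
qed

lemma sum_card_small_words_le:
  "(\<Sum>(a, b)\<in>{1, 2, 3} \<times> {1, 2, 3}. card (small_words (X div ((a + 1) * (b + 1)))))
    \<le> card (small_words X)"
proof -
  define D where "D = {1, 2, 3 :: nat} \<times> {1, 2, 3 :: nat}"
  define S where "S = (\<lambda>(a, b). (\<lambda>bs. a # b # bs) ` small_words (X div ((a + 1) * (b + 1))))"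
  have "(\<Sum>(a, b)\<in>D. card (small_words (X div ((a + 1) * (b + 1))))) = (\<Sum>i\<in>D. card (S i))"
    by (intro sum.cong refl) (auto simp: S_def card_image inj_on_def)
  also have "\<dots> = card (\<Union>i\<in>D. S i)"
  proof -
    have "S i \<inter> S j = {}" if "i \<noteq> j" for i j
      using that by (cases i; cases j) (auto simp: S_def)
    then show ?thesis
      using finite_small_words by (subst card_UN_disjoint) (simp_all add: D_def S_def split_def)
  qed
  also have "\<dots> \<le> card (small_words X)"
  proof (intro card_mono[OF finite_small_words] UN_least)
    fix i assume "i \<in> D"
    then show "S i \<subseteq> small_words X"
      using Cons2_in_small_words by (cases i) (auto simp: D_def S_def)
  qed
  finally show ?thesis
    by (simp add: D_def)
qed

text \<open>Prepending a block $[a, b]$ with $a, b \in \{1,2,3\}$ divides the weight budget by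
  $(a+1)(b+1)$; the count grows linearly because $\sum_{a,b} \frac{1}{(a+1)(b+1)} = \frac{169}{144} > 1$.\<close>

lemma card_small_words_ge: "1 \<le> X \<Longrightarrow> (real X + 1) / 16 \<le> real (card (small_words X))"
proof (induction X rule: less_induct)
  case (less X)
  show ?case
  proof (cases "X < 16")
    case True
    have "[] \<in> small_words X"
      using less.prems by (simp add: small_words_def)
    then have "1 \<le> card (small_words X)"
      using finite_small_words by (simp add: Suc_le_eq card_gt_0_iff) blast
    then show ?thesis
      using True by simp
  next
    case False
    define D where "D = {1, 2, 3 :: nat} \<times> {1, 2, 3 :: nat}"
    define w :: "nat \<times> nat \<Rightarrow> nat" where "w = (\<lambda>(a, b). (a + 1) * (b + 1))"
    have "(real X + 1) / 16 \<le> (real X + 1) / 16 * (\<Sum>i\<in>D. 1 / real (w i))"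
      by (simp add: D_def w_def flip: sum.cartesian_product)
    also have "\<dots> = (\<Sum>i\<in>D. (real X + 1) / (16 * real (w i)))"
      by (simp add: sum_distrib_left)
    also have "\<dots> \<le> (\<Sum>i\<in>D. real (card (small_words (X div w i))))"
    proof (rule sum_mono)
      fix i assume "i \<in> D"
      then have w: "4 \<le> w i" "w i \<le> 16"
        by (auto simp: D_def w_def)
      then have "1 \<le> X div w i" "X div w i < X"
        using False less.prems by (simp_all add: Suc_le_eq div_greater_zero_iff)
      then have IH: "(real (X div w i) + 1) / 16 \<le> real (card (small_words (X div w i)))"
        by (intro less.IH)
      have "(real X + 1) / (16 * real (w i)) = (real X + 1) / real (w i) / 16"
        by simp
      also have "\<dots> \<le> (real (X div w i) + 1) / 16"
        by (rule divide_right_mono[OF real_div_plus_one_ge]) (use w in simp_all)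
      finally show "(real X + 1) / (16 * real (w i)) \<le> real (card (small_words (X div w i)))"
        using IH by linarith
    qed
    also have "\<dots> \<le> real (card (small_words X))"
      using sum_card_small_words_le[of X] by (simp add: D_def w_def split_def flip: of_nat_sum)
    finally show ?thesis .
  qed
qed

lemma not_dvd_cf_cross:
  assumes "canonical_cf u" "canonical_cf v" "u \<noteq> v"
    and "cf_q u \<le> D" "cf_q v \<le> D" "D * D < int p"
  shows "\<not> int p dvd cf_p u * cf_q v - cf_q u * cf_p v"
proof
  assume dvd: "int p dvd cf_p u * cf_q v - cf_q u * cf_p v"
  have "0 \<le> cf_p u" "cf_p u \<le> cf_q u" "0 \<le> cf_p v" "cf_p v \<le> cf_q v"
    using cf_matrix_entries_nonneg canonical_cf_nonzero assms(1,2) by blast+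
  moreover have "0 \<le> cf_q u" "0 \<le> cf_q v"
    using cf_q_pos canonical_cf_nonzero assms(1,2) by (meson order_trans zero_le_one)+
  ultimately have "cf_p u * cf_q v \<le> D * D" "cf_q u * cf_p v \<le> D * D"
    "0 \<le> cf_p u * cf_q v" "0 \<le> cf_q u * cf_p v"
    using assms(4,5) by (auto intro: mult_mono)
  then have "\<bar>cf_p u * cf_q v - cf_q u * cf_p v\<bar> < int p"
    using assms(6) by linarith
  moreover have "cf_p u * cf_q v - cf_q u * cf_p v \<noteq> 0"
    using canonical_cf_cross_ne[OF assms(1-3)] by simp
  ultimately show False
    using dvd_imp_le_int[OF _ dvd] by linarith
qed

lemma det2_adj_row2_red:
  "det2 (adj_row2 (red p x)) (adj_row2 (red p y)) mod int p = det2 (adj_row2 x) (adj_row2 y) mod int p"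
  using mod_diff_prod_mod[of "m11 x" "int p" "m21 y" "m21 x" "m11 y"]
  by (simp add: det2_def adj_row2_def algebra_simps)

lemma det2_adj_col1_red:
  "det2 (adj_col1 (red p x)) (adj_col1 (red p y)) mod int p = det2 (adj_col1 x) (adj_col1 y) mod int p"
  using mod_diff_prod_mod[of "m21 x" "int p" "m22 y" "m22 x" "m21 y"]
  by (simp add: det2_def adj_col1_def algebra_simps)

lemma invp_red: "invp p (red p x) = invp p x"
  by (simp add: invp_eq_red_madj) (rule mat2_eqI; simp add: mod_minus_eq)

lemma det2_adj_row2_cf_matrix_snoc1:
  "det2 (adj_row2 (red p (cf_matrix (c1 @ [1])))) (adj_row2 (red p (cf_matrix (c2 @ [1])))) mod int p
    = (cf_p c1 * cf_q c2 - cf_q c1 * cf_p c2) mod int p"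
  by (simp only: det2_adj_row2_red) (simp add: det2_def adj_row2_def cf_matrix_snoc_entries algebra_simps)

lemma det2_adj_col1_cf_matrix_rev:
  "det2 (adj_col1 (red p (cf_matrix (rev c1)))) (adj_col1 (red p (cf_matrix (rev c2)))) mod int p
    = (cf_p c1 * cf_q c2 - cf_q c1 * cf_p c2) mod int p"
  by (simp only: det2_adj_col1_red) (simp add: det2_def adj_col1_def cf_matrix_rev_entries algebra_simps)

lemma det2_adj_row2_invp_cf_matrix_rev:
  "det2 (adj_row2 (invp p (red p (cf_matrix (rev c1))))) (adj_row2 (invp p (red p (cf_matrix (rev c2)))))
    mod int p = (cf_p c1 * cf_q c2 - cf_q c1 * cf_p c2) mod int p"
  by (simp only: invp_red, simp only: invp_eq_red_madj det2_adj_row2_red)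
    (simp add: det2_def adj_row2_def cf_matrix_rev_entries)

lemma det2_adj_col1_invp_cf_matrix_snoc1:
  "det2 (adj_col1 (invp p (red p (cf_matrix (c1 @ [1]))))) (adj_col1 (invp p (red p (cf_matrix (c2 @ [1])))))
    mod int p = (cf_p c1 * cf_q c2 - cf_q c1 * cf_p c2) mod int p"
  by (simp only: invp_red, simp only: invp_eq_red_madj det2_adj_col1_red)
    (simp add: det2_def adj_col1_def cf_matrix_snoc_entries)

text \<open>Distinct reduced fractions with denominators at most $D$, where $D^2 < p$, stay distinct
  modulo $p$; the matrices built from them therefore have pairwise independent rows (or columns).\<close>

lemma cf_family_pairwise_indep:
  assumes F: "\<And>c. c \<in> F \<Longrightarrow> canonical_cf c \<and> cf_q c \<le> D" and D: "D * D < int p"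
    and det: "\<And>c1 c2. c1 \<in> F \<Longrightarrow> c2 \<in> F \<Longrightarrow>
      det2 (v (f c1)) (v (f c2)) mod int p = (cf_p c1 * cf_q c2 - cf_q c1 * cf_p c2) mod int p"
  shows "inj_on f F" "pairwise_indep_mod p v (f ` F)"
proof -
  have indep: "indep_mod p (v (f c1)) (v (f c2))" if "c1 \<in> F" "c2 \<in> F" "c1 \<noteq> c2" for c1 c2
    using not_dvd_cf_cross[of c1 c2 D p] F[OF that(1)] F[OF that(2)] that(3) D det[OF that(1,2)]
    by (simp add: indep_mod_def dvd_eq_mod_eq_0)
  show "inj_on f F"
  proof (rule inj_onI, rule ccontr)
    fix c1 c2 assume "c1 \<in> F" "c2 \<in> F" "f c1 = f c2" "c1 \<noteq> c2"
    then show False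
      using indep[of c1 c2] by (simp add: indep_mod_def det2_def mult.commute)
  qed
  show "pairwise_indep_mod p v (f ` F)"
    using indep unfolding pairwise_indep_mod_def by blast
qed

lemma pairwise_indep_mod_subset:
  "pairwise_indep_mod p v S \<Longrightarrow> T \<subseteq> S \<Longrightarrow> pairwise_indep_mod p v T"
  unfolding pairwise_indep_mod_def by blast

lemma card_prod3_ge_if_cf_families:
  assumes "prime p" "finite F" "finite F'" "k \<le> card F" "k \<le> card F'" "k * k \<le> p"
    and canonical: "\<And>c. c \<in> F \<union> F' \<Longrightarrow> canonical_cf c \<and> cf_q c \<le> D" and "D * D < int p"
    and "f ` F \<subseteq> X \<inter> SL2 p" "g ` F' \<subseteq> Z \<inter> SL2 p"
    and "\<And>c1 c2. c1 \<in> F \<Longrightarrow> c2 \<in> F \<Longrightarrow>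
      det2 (adj_row2 (f c1)) (adj_row2 (f c2)) mod int p = (cf_p c1 * cf_q c2 - cf_q c1 * cf_p c2) mod int p"
    and "\<And>c1 c2. c1 \<in> F' \<Longrightarrow> c2 \<in> F' \<Longrightarrow>
      det2 (adj_col1 (g c1)) (adj_col1 (g c2)) mod int p = (cf_p c1 * cf_q c2 - cf_q c1 * cf_p c2) mod int p"
  shows "real (k * k) * real p ^ 2 / 4 \<le> real (card (prod3 p X (borel p) Z))"
proof -
  have f: "inj_on f F" "pairwise_indep_mod p adj_row2 (f ` F)"
    using cf_family_pairwise_indep[of F D p adj_row2 f] canonical assms(8,11) by blast+
  have g: "inj_on g F'" "pairwise_indep_mod p adj_col1 (g ` F')"
    using cf_family_pairwise_indep[of F' D p adj_col1 g] canonical assms(8,12) by blast+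
  obtain G where G: "G \<subseteq> f ` F" "card G = k"
    using obtain_subset_with_card_n[of k "f ` F"] card_image[OF f(1)] assms(4) by metis
  obtain H where H: "H \<subseteq> g ` F'" "card H = k"
    using obtain_subset_with_card_n[of k "g ` F'"] card_image[OF g(1)] assms(5) by metis
  have "real (card G * card H) * real p ^ 2 / 4 \<le> real (card (prod3 p X (borel p) Z))"
  proof (rule card_prod3_borel_ge[OF assms(1)])
    show "G \<subseteq> X \<inter> SL2 p" "H \<subseteq> Z \<inter> SL2 p"
      using G(1) H(1) assms(9,10) by blast+
    show "finite G" "finite H"
      using G(1) H(1) assms(2,3) finite_subset by blast+
    show "pairwise_indep_mod p adj_row2 G" "pairwise_indep_mod p adj_col1 H"
      using pairwise_indep_mod_subset f(2) g(2) G(1) H(1) by blast+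
    show "card G * card H \<le> p"
      using G(2) H(2) assms(6) by simp
  qed
  then show ?thesis
    using G(2) H(2) by simp
qed

lemma small_words_append:
  assumes "l \<in> small_words X" "t \<noteq> []" "set t \<subseteq> {2}"
  shows "canonical_cf (l @ t) \<and> set (l @ t) \<subseteq> {1, 2, 3} \<and> cf_q (l @ t) \<le> int (weight t * X)"
proof -
  have l: "set l \<subseteq> {1, 2, 3}" "weight l \<le> X"
    using assms(1) by (simp_all add: small_words_def)
  then have set: "set (l @ t) \<subseteq> {1, 2, 3}"
    using assms(3) by auto
  then have "0 \<notin> set (l @ t)"
    by auto
  then have "cf_q (l @ t) \<le> int (weight l * weight t)"
    using cf_q_le_weight[of "l @ t"] by simp
  also have "\<dots> \<le> int (weight t * X)"
    using l(2) by (intro of_nat_mono) (simp add: mult.commute[of "weight t"])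
  moreover have "last t \<in> {2}"
    using last_in_set[OF assms(2)] assms(3) by blast
  then have "2 \<le> last (l @ t)"
    using assms(2) by simp
  ultimately show ?thesis
    using set \<open>0 \<notin> set (l @ t)\<close> by (simp add: canonical_cf_def)
qed

lemma q_entry_eq_m22: "q_entry x = m22 x"
  by (cases x rule: prod_cases4) simp

lemma cf_matrix_in_cfA:
  assumes "1 < p" "3 \<le> M" "even (length bs)" "set bs \<subseteq> {1, 2, 3}" "cf_q bs \<le> int p - 1"
  shows "red p (cf_matrix bs) \<in> cfA M p \<inter> SL2 p"
    and "invp p (red p (cf_matrix bs)) \<in> inv_set p (cfA M p) \<inter> SL2 p"
proof -
  have "set bs \<subseteq> {1..M}"
    using assms(2,4) by auto
  then have "red p (cf_matrix bs) \<in> cfA M p"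
    using assms(3,5) unfolding cfA_def q_entry_eq_m22 by blast
  moreover have "red p (cf_matrix bs) \<in> SL2 p"
    using assms(1,3) by (intro red_in_SL2) (simp_all add: mdet_cf_matrix)
  ultimately show "red p (cf_matrix bs) \<in> cfA M p \<inter> SL2 p"
    and "invp p (red p (cf_matrix bs)) \<in> inv_set p (cfA M p) \<inter> SL2 p"
    using invp_in_SL2[of p] assms(1) by (simp_all add: inv_set_def)
qed

text \<open>Appending the partial quotient 1 to $c = l\,2$ makes the
  length even and puts $(p_c, q_c)$ into the first column; reversing $c = l\,2\,2$ puts it into
  the last row.\<close>

definition small_cfs_odd :: "nat \<Rightarrow> nat list set" where
  "small_cfs_odd X = (\<lambda>l. l @ [2]) ` small_words X"

definition small_cfs_even :: "nat \<Rightarrow> nat list set" where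
  "small_cfs_even X = (\<lambda>l. l @ [2, 2]) ` small_words X"

lemma card_small_cfs:
  "card (small_cfs_odd X) = card (small_words X)" "card (small_cfs_even X) = card (small_words X)"
  "finite (small_cfs_odd X)" "finite (small_cfs_even X)"
  by (simp_all add: small_cfs_odd_def small_cfs_even_def card_image inj_on_def finite_small_words)

lemma small_cfs_odd_props:
  assumes "c \<in> small_cfs_odd X"
  shows "canonical_cf c" "cf_q c \<le> int (9 * X)"
    and "even (length (c @ [1]))" "set (c @ [1]) \<subseteq> {1, 2, 3}" "cf_q (c @ [1]) \<le> int (9 * X)"
proof -
  obtain l where l: "l \<in> small_words X" "c = l @ [2]"
    using assms by (auto simp: small_cfs_odd_def)
  then have c: "canonical_cf c" "set c \<subseteq> {1, 2, 3}" "cf_q c \<le> int (3 * X)"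
    using small_words_append[of l X "[2]"] by simp_all
  have "cf_q (c @ [1]) = cf_q_prev c + cf_q c"
    by (simp add: cf_matrix_snoc_entries)
  also have "\<dots> \<le> 2 * cf_q c"
    using cf_matrix_entries_nonneg[OF canonical_cf_nonzero[OF c(1)]] by simp
  finally show "cf_q (c @ [1]) \<le> int (9 * X)" "cf_q c \<le> int (9 * X)"
    using c(3) by simp_all
  show "canonical_cf c" "set (c @ [1]) \<subseteq> {1, 2, 3}" "even (length (c @ [1]))"
    using c l by (simp_all add: small_words_def)
qed

lemma small_cfs_even_props:
  assumes "c \<in> small_cfs_even X"
  shows "canonical_cf c" "cf_q c \<le> int (9 * X)"
    and "even (length (rev c))" "set (rev c) \<subseteq> {1, 2, 3}" "cf_q (rev c) \<le> int (9 * X)"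
proof -
  obtain l where l: "l \<in> small_words X" "c = l @ [2, 2]"
    using assms by (auto simp: small_cfs_even_def)
  then show c: "canonical_cf c" "cf_q c \<le> int (9 * X)" "set (rev c) \<subseteq> {1, 2, 3}"
    using small_words_append[of l X "[2, 2]"] by simp_all
  show "cf_q (rev c) \<le> int (9 * X)"
    using c(2) by (simp only: cf_matrix_rev_entries)
  show "even (length (rev c))"
    using l by (simp add: small_words_def)
qed

lemma canonical_small_cfs:
  "c \<in> small_cfs_odd X \<union> small_cfs_even X \<Longrightarrow> canonical_cf c \<and> cf_q c \<le> int (9 * X)"
  using small_cfs_odd_props small_cfs_even_props by blast

lemma small_cfs_bounds:
  assumes "1 \<le> X" "81 * X ^ 2 < p"
  shows "int (9 * X) \<le> int p - 1" "int (9 * X) * int (9 * X) < int p"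
proof -
  have "9 * X \<le> 81 * X ^ 2" "(9 * X) * (9 * X) < p"
    using assms by (simp_all add: power2_eq_square)
  then show "int (9 * X) \<le> int p - 1" "int (9 * X) * int (9 * X) < int p"
    using assms(2) by (simp_all only: of_nat_mult[symmetric] of_nat_less_iff)
qed

lemma small_cfs_in_cfA:
  assumes "3 \<le> M" "1 < p" "int (9 * X) \<le> int p - 1"
  shows "c \<in> small_cfs_odd X \<Longrightarrow> red p (cf_matrix (c @ [1])) \<in> cfA M p \<inter> SL2 p"
    and "c \<in> small_cfs_odd X \<Longrightarrow> invp p (red p (cf_matrix (c @ [1]))) \<in> inv_set p (cfA M p) \<inter> SL2 p"
    and "c \<in> small_cfs_even X \<Longrightarrow> red p (cf_matrix (rev c)) \<in> cfA M p \<inter> SL2 p"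
    and "c \<in> small_cfs_even X \<Longrightarrow> invp p (red p (cf_matrix (rev c))) \<in> inv_set p (cfA M p) \<inter> SL2 p"
  using cf_matrix_in_cfA[OF assms(2,1)] small_cfs_odd_props small_cfs_even_props assms(3)
  by (meson order_trans)+

lemma card_prod3_cfA_ge:
  assumes "3 \<le> M" "prime p" "1 \<le> X" "81 * X ^ 2 < p" "k \<le> card (small_words X)" "k * k \<le> p"
  shows "real (k * k) * real p ^ 2 / 4 \<le> real (card (prod3 p (cfA M p) (borel p) (cfA M p)))"
proof (rule card_prod3_ge_if_cf_families[OF assms(2) card_small_cfs(3,4) _ _ assms(6)
      canonical_small_cfs small_cfs_bounds(2)[OF assms(3,4)]])
  show "k \<le> card (small_cfs_odd X)" "k \<le> card (small_cfs_even X)"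
    using assms(5) by (simp_all add: card_small_cfs)
  show "(\<lambda>c. red p (cf_matrix (c @ [1]))) ` small_cfs_odd X \<subseteq> cfA M p \<inter> SL2 p"
    "(\<lambda>c. red p (cf_matrix (rev c))) ` small_cfs_even X \<subseteq> cfA M p \<inter> SL2 p"
    using small_cfs_in_cfA[OF assms(1) prime_gt_1_nat[OF assms(2)] small_cfs_bounds(1)[OF assms(3,4)]]
    by blast+
  show "det2 (adj_row2 (red p (cf_matrix (c1 @ [1])))) (adj_row2 (red p (cf_matrix (c2 @ [1]))))
      mod int p = (cf_p c1 * cf_q c2 - cf_q c1 * cf_p c2) mod int p" for c1 c2
    by (rule det2_adj_row2_cf_matrix_snoc1)
  show "det2 (adj_col1 (red p (cf_matrix (rev c1)))) (adj_col1 (red p (cf_matrix (rev c2))))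
      mod int p = (cf_p c1 * cf_q c2 - cf_q c1 * cf_p c2) mod int p" for c1 c2
    by (rule det2_adj_col1_cf_matrix_rev)
qed

lemma card_prod3_inv_cfA_ge:
  assumes "3 \<le> M" "prime p" "1 \<le> X" "81 * X ^ 2 < p" "k \<le> card (small_words X)" "k * k \<le> p"
  shows "real (k * k) * real p ^ 2 / 4
    \<le> real (card (prod3 p (inv_set p (cfA M p)) (borel p) (inv_set p (cfA M p))))"
proof (rule card_prod3_ge_if_cf_families[OF assms(2) card_small_cfs(4,3) _ _ assms(6)
      _ small_cfs_bounds(2)[OF assms(3,4)]])
  show "k \<le> card (small_cfs_even X)" "k \<le> card (small_cfs_odd X)"
    using assms(5) by (simp_all add: card_small_cfs)
  show "canonical_cf c \<and> cf_q c \<le> int (9 * X)" if "c \<in> small_cfs_even X \<union> small_cfs_odd X" for c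
    using canonical_small_cfs that by blast
  show "(\<lambda>c. invp p (red p (cf_matrix (rev c)))) ` small_cfs_even X \<subseteq> inv_set p (cfA M p) \<inter> SL2 p"
    "(\<lambda>c. invp p (red p (cf_matrix (c @ [1])))) ` small_cfs_odd X \<subseteq> inv_set p (cfA M p) \<inter> SL2 p"
    using small_cfs_in_cfA[OF assms(1) prime_gt_1_nat[OF assms(2)] small_cfs_bounds(1)[OF assms(3,4)]]
    by blast+
  show "det2 (adj_row2 (invp p (red p (cf_matrix (rev c1))))) (adj_row2 (invp p (red p (cf_matrix (rev c2)))))
      mod int p = (cf_p c1 * cf_q c2 - cf_q c1 * cf_p c2) mod int p" for c1 c2
    by (rule det2_adj_row2_invp_cf_matrix_rev)
  show "det2 (adj_col1 (invp p (red p (cf_matrix (c1 @ [1]))))) (adj_col1 (invp p (red p (cf_matrix (c2 @ [1])))))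
      mod int p = (cf_p c1 * cf_q c2 - cf_q c1 * cf_p c2) mod int p" for c1 c2
    by (rule det2_adj_col1_invp_cf_matrix_snoc1)
qed

lemma exists_small_words_params:
  assumes "102400 \<le> p"
  obtains X k where "1 \<le> X" "81 * X ^ 2 < p" "k \<le> card (small_words X)" "k * k \<le> p"
    "real p / 102400 \<le> real (k * k)"
proof -
  define s where "s = sqrt (real p)"
  have s: "s * s = real p" "320 \<le> s"
    using real_sqrt_le_mono[of 102400 "real p"] assms by (simp_all add: s_def real_sqrt_eq_iff)
  define X where "X = nat \<lfloor>s / 10\<rfloor>"
  have X: "real X \<le> s / 10" "s / 10 - 1 < real X"
    using s(2) by (simp_all add: X_def) linarith+
  define k where "k = nat \<lfloor>(real X + 1) / 16\<rfloor>"
  have "real k = of_int \<lfloor>(real X + 1) / 16\<rfloor>"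
    by (simp add: k_def)
  then have k: "real k \<le> (real X + 1) / 16" "(real X + 1) / 16 - 1 < real k"
    using floor_correct[of "(real X + 1) / 16"] by linarith+
  have "31 \<le> real X"
    using X s(2) by linarith
  then have "1 \<le> X" "real k \<le> real X"
    using k(1) by simp_all
  have "100 * (real X * real X) \<le> real p"
    using X(1) mult_mono[OF X(1) X(1)] s by simp
  moreover have "0 < real X * real X"
    using \<open>31 \<le> real X\<close> by simp
  ultimately have "real (81 * X ^ 2) < real p" "real (k * k) \<le> real p"
    using mult_mono[OF \<open>real k \<le> real X\<close> \<open>real k \<le> real X\<close>]
    by (simp_all add: power2_eq_square)
  moreover have "real k \<le> real (card (small_words X))"
    using k(1) card_small_words_ge[OF \<open>1 \<le> X\<close>] by linarith
  moreover have "s / 320 \<le> real k"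
    using X(2) k(2) s(2) by (simp add: field_simps)
  then have "(s / 320) * (s / 320) \<le> real k * real k"
    using s(2) by (intro mult_mono) simp_all
  then have "real p / 102400 \<le> real (k * k)"
    using s(1) by (simp add: field_simps)
  ultimately show ?thesis
    using that \<open>1 \<le> X\<close> by (simp only: of_nat_less_iff of_nat_le_iff)
qed

lemma one_mem_cfA: "1 < p \<Longrightarrow> (1, 0, 0, 1) \<in> cfA M p"
  unfolding cfA_def by (rule CollectI, rule exI[of _ "[]"]) simp

lemma card_prod3_cfA_pos:
  assumes "1 < p"
  shows "1 \<le> card (prod3 p (cfA M p) (borel p) (cfA M p))"
    and "1 \<le> card (prod3 p (inv_set p (cfA M p)) (borel p) (inv_set p (cfA M p)))"
proof -
  have one: "mulp p (mulp p (1, 0, 0, 1) (1, 0, 0, 1)) (1, 0, 0, 1) = (1, 0, 0, 1)"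
    "(1, 0, 0, 1) \<in> borel p" "invp p (1, 0, 0, 1) = (1, 0, 0, 1)"
    using assms by (simp_all add: mulp_def borel_def SL2_def)
  have "(1, 0, 0, 1) \<in> inv_set p (cfA M p)"
    using one_mem_cfA[OF assms, of M] one(3) unfolding inv_set_def by (metis image_eqI)
  then have "(1, 0, 0, 1) \<in> prod3 p (cfA M p) (borel p) (cfA M p)"
    "(1, 0, 0, 1) \<in> prod3 p (inv_set p (cfA M p)) (borel p) (inv_set p (cfA M p))"
    using one one_mem_cfA[OF assms]
    unfolding prod3_def by (intro CollectI exI[of _ "(1, 0, 0, 1)"] conjI; simp)+
  then show "1 \<le> card (prod3 p (cfA M p) (borel p) (cfA M p))"
    and "1 \<le> card (prod3 p (inv_set p (cfA M p)) (borel p) (inv_set p (cfA M p)))"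
    using finite_prod3[of p] assms by (auto simp: Suc_le_eq card_gt_0_iff)
qed

lemma card_prod3_cfA_ge_cube:
  assumes "3 \<le> M"
  shows "\<exists>c>0. \<forall>p::nat. prime p \<longrightarrow>
           real (card (prod3 p (cfA M p) (borel p) (cfA M p))) \<ge> c * real p ^ 3 \<and>
           real (card (prod3 p (inv_set p (cfA M p)) (borel p) (inv_set p (cfA M p))))
              \<ge> c * real p ^ 3"
proof (intro exI[of _ "1 / 102400 ^ 3"] conjI allI impI)
  fix p :: nat assume prime: "prime p"
  let ?ABA = "prod3 p (cfA M p) (borel p) (cfA M p)"
  let ?A'BA' = "prod3 p (inv_set p (cfA M p)) (borel p) (inv_set p (cfA M p))"
  have p: "1 < p" using prime by (rule prime_gt_1_nat)
  have "1 / 102400 ^ 3 * real p ^ 3 \<le> real (card ?ABA) \<and>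
      1 / 102400 ^ 3 * real p ^ 3 \<le> real (card ?A'BA')"
  proof (cases "p < 102400")
    case True
    then have "real p ^ 3 \<le> 102400 ^ 3"
      by (intro power_mono) simp_all
    moreover have "1 \<le> card ?ABA" "1 \<le> card ?A'BA'"
      using card_prod3_cfA_pos[OF p] by simp_all
    ultimately show ?thesis
      by simp
  next
    case False
    then obtain X k where "1 \<le> X" "81 * X ^ 2 < p" "k \<le> card (small_words X)" "k * k \<le> p"
      and k: "real p / 102400 \<le> real (k * k)"
      using exists_small_words_params by (metis not_le)
    then have "real (k * k) * real p ^ 2 / 4 \<le> real (card ?ABA)"
      "real (k * k) * real p ^ 2 / 4 \<le> real (card ?A'BA')"
      using card_prod3_cfA_ge[OF assms prime] card_prod3_inv_cfA_ge[OF assms prime] by blast+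
    moreover have "1 / 102400 ^ 3 * real p ^ 3 \<le> real p / 102400 * real p ^ 2 / 4"
      by (simp add: power3_eq_cube power2_eq_square)
    moreover have "real p / 102400 * real p ^ 2 / 4 \<le> real (k * k) * real p ^ 2 / 4"
      using k by (intro divide_right_mono mult_right_mono) simp_all
    ultimately show ?thesis
      by linarith
  qed
  then show "1 / 102400 ^ 3 * real p ^ 3 \<le> real (card ?ABA)"
    "1 / 102400 ^ 3 * real p ^ 3 \<le> real (card ?A'BA')"
    by simp_all
qed simp

section \<open>The Hausdorff dimension of $E_2$\<close>

lemma hausdorff_pre_le_finite_cover:
  assumes "finite I" "E \<subseteq> (\<Union>i\<in>I. U i)" "0 \<le> \<delta>"
    and "\<And>i. i \<in> I \<Longrightarrow> bounded (U i) \<and> diameter (U i) \<le> \<delta>"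
  shows "hausdorff_pre s \<delta> E \<le> ennreal (\<Sum>i\<in>I. hd_term s (U i))"
proof -
  obtain h where h: "bij_betw h {0..<card I} I"
    using ex_bij_betw_nat_finite[OF assms(1)] by blast
  define f where "f n = (if n < card I then U (h n) else {})" for n
  have "E \<subseteq> (\<Union>n. f n)"
  proof
    fix x assume "x \<in> E"
    then obtain i where "i \<in> I" "x \<in> U i"
      using assms(2) by blast
    moreover obtain n where "n < card I" "h n = i"
      using h \<open>i \<in> I\<close> by (metis atLeastLessThan_iff bij_betw_iff_bijections)
    ultimately show "x \<in> (\<Union>n. f n)"
      by (auto simp: f_def)
  qed
  moreover have "bounded (f n) \<and> diameter (f n) \<le> \<delta>" for n
    using assms(3,4) bij_betwE[OF h] by (simp add: f_def)
  ultimately have "hausdorff_pre s \<delta> E \<le> (\<Sum>n. ennreal (hd_term s (f n)))"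
    unfolding hausdorff_pre_def by (intro INF_lower) blast
  also have "\<dots> = (\<Sum>n<card I. ennreal (hd_term s (f n)))"
    by (rule suminf_finite) (auto simp: f_def hd_term_def)
  also have "\<dots> = (\<Sum>i\<in>I. ennreal (hd_term s (U i)))"
    using sum.reindex_bij_betw[OF h, of "\<lambda>i. ennreal (hd_term s (U i))"]
    by (simp add: f_def atLeast0LessThan)
  also have "\<dots> = ennreal (\<Sum>i\<in>I. hd_term s (U i))"
    by (rule sum_ennreal) (simp add: hd_term_def)
  finally show ?thesis .
qed

lemma hausdorff_dim_le:
  assumes "0 \<le> s" "\<And>\<delta>. 0 < \<delta> \<Longrightarrow> hausdorff_pre s \<delta> E = 0"
  shows "hausdorff_dim E \<le> s"
proof -
  have "hausdorff_measure s E = 0"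
    using assms(2) by (simp add: hausdorff_measure_def)
  then have "s \<in> {s. 0 \<le> s \<and> hausdorff_measure s E = 0}"
    using assms(1) by simp
  moreover have "bdd_below {s. 0 \<le> s \<and> hausdorff_measure s E = 0}"
    by (rule bdd_belowI[of _ 0]) simp
  ultimately show ?thesis
    unfolding hausdorff_dim_def by (rule cInf_lower)
qed

definition moebius_mat :: "mat2 \<Rightarrow> real \<Rightarrow> real" where
  "moebius_mat x t = (of_int (m11 x) * t + of_int (m12 x)) / (of_int (m21 x) * t + of_int (m22 x))"

lemma moebius_mat_cf_matrix_snoc:
  assumes "0 \<notin> set bs" "1 \<le> b" "0 \<le> t"
  shows "moebius_mat (cf_matrix (bs @ [b])) t = moebius_mat (cf_matrix bs) (1 / (real b + t))"
proof -
  define a where "a = real_of_int (cf_p_prev bs)"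
  define c where "c = real_of_int (cf_q_prev bs)"
  define p where "p = real_of_int (cf_p bs)"
  define q where "q = real_of_int (cf_q bs)"
  have bt: "0 < real b + t"
    using assms(2,3) by simp
  have "moebius_mat (cf_matrix (bs @ [b])) t = (a + p * (real b + t)) / (c + q * (real b + t))"
    by (simp add: moebius_mat_def cf_matrix_snoc_entries a_def c_def p_def q_def algebra_simps)
  also have "\<dots> = (a * (1 / (real b + t)) + p) / (c * (1 / (real b + t)) + q)"
  proof -
    have "a * (1 / (real b + t)) + p = (a + p * (real b + t)) / (real b + t)"
      "c * (1 / (real b + t)) + q = (c + q * (real b + t)) / (real b + t)"
      using bt by (simp_all add: field_simps)
    then show ?thesis
      using bt by simp
  qed
  also have "\<dots> = moebius_mat (cf_matrix bs) (1 / (real b + t))"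
    by (simp add: moebius_mat_def a_def c_def p_def q_def)
  finally show ?thesis .
qed

lemma gauss_map_step:
  assumes "0 < x" "x < 1" "x \<notin> \<rat>"
  shows "0 < gauss_map x \<and> gauss_map x < 1 \<and> gauss_map x \<notin> \<rat> \<and> 1 \<le> \<lfloor>1 / x\<rfloor>
     \<and> x = 1 / (of_int \<lfloor>1 / x\<rfloor> + gauss_map x)"
proof -
  have g: "gauss_map x = 1 / x - of_int \<lfloor>1 / x\<rfloor>"
    by (simp add: gauss_map_def frac_def)
  have "1 / x \<notin> \<rat>"
    using assms(3) Rats_divide[OF Rats_1, of "1 / x"] by auto
  then have irrational: "gauss_map x \<notin> \<rat>"
    using g Rats_add[of "gauss_map x" "of_int \<lfloor>1 / x\<rfloor>"] by auto
  then have "gauss_map x \<noteq> 0"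
    by auto
  moreover have "0 \<le> gauss_map x" "gauss_map x < 1"
    by (simp_all add: gauss_map_def frac_lt_1)
  moreover have "1 \<le> \<lfloor>1 / x\<rfloor>"
    using assms(1,2) by (simp add: le_floor_iff)
  moreover have "x = 1 / (of_int \<lfloor>1 / x\<rfloor> + gauss_map x)"
    using g assms(1) by simp
  ultimately show ?thesis
    using irrational by simp
qed

lemma gauss_map_iterate:
  "0 < x \<Longrightarrow> x < 1 \<Longrightarrow> x \<notin> \<rat> \<Longrightarrow>
    0 < (gauss_map ^^ n) x \<and> (gauss_map ^^ n) x < 1 \<and> (gauss_map ^^ n) x \<notin> \<rat>"
  using gauss_map_step by (induction n) auto

lemma partial_quotient_ge_1: "0 < x \<Longrightarrow> x < 1 \<Longrightarrow> x \<notin> \<rat> \<Longrightarrow> 1 \<le> partial_quotient x n"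
  unfolding partial_quotient_def using gauss_map_iterate gauss_map_step by blast

definition cf_prefix :: "real \<Rightarrow> nat \<Rightarrow> nat list" where
  "cf_prefix x n = map (\<lambda>i. nat (partial_quotient x i)) [0..<n]"

lemma cf_prefix_nonzero:
  assumes "0 < x" "x < 1" "x \<notin> \<rat>"
  shows "0 \<notin> set (cf_prefix x n)"
proof -
  have "nat (partial_quotient x i) \<noteq> 0" for i
    using partial_quotient_ge_1[OF assms, of i] by simp
  then show ?thesis
    by (auto simp: cf_prefix_def)
qed

lemma moebius_mat_cf_prefix:
  assumes "0 < x" "x < 1" "x \<notin> \<rat>"
  shows "x = moebius_mat (cf_matrix (cf_prefix x n)) ((gauss_map ^^ n) x)"
proof (induction n)
  case 0
  then show ?case by (simp add: cf_prefix_def moebius_mat_def)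
next
  case (Suc n)
  define y where "y = (gauss_map ^^ n) x"
  define b where "b = nat (partial_quotient x n)"
  have y: "0 < y" "y < 1" "y \<notin> \<rat>"
    using gauss_map_iterate[OF assms] by (simp_all add: y_def)
  have "1 \<le> partial_quotient x n"
    by (rule partial_quotient_ge_1[OF assms])
  then have "real b = of_int (partial_quotient x n)" "1 \<le> b"
    by (simp_all add: b_def)
  then have b: "real b = of_int \<lfloor>1 / y\<rfloor>" "1 \<le> b"
    by (simp_all add: partial_quotient_def y_def)
  have "moebius_mat (cf_matrix (cf_prefix x (Suc n))) ((gauss_map ^^ Suc n) x)
      = moebius_mat (cf_matrix (cf_prefix x n @ [b])) (gauss_map y)"
    by (simp add: cf_prefix_def b_def y_def)
  also have "\<dots> = moebius_mat (cf_matrix (cf_prefix x n)) (1 / (real b + gauss_map y))"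
    using cf_prefix_nonzero[OF assms] b(2) gauss_map_step[OF y]
    by (intro moebius_mat_cf_matrix_snoc) simp_all
  also have "\<dots> = moebius_mat (cf_matrix (cf_prefix x n)) y"
    using gauss_map_step[OF y] b(1) by simp
  finally show ?case
    using Suc by (simp add: y_def)
qed

definition words12 :: "nat \<Rightarrow> nat list set" where
  "words12 n = {bs. length bs = n \<and> set bs \<subseteq> {1, 2}}"

definition cylinder :: "nat list \<Rightarrow> real set" where
  "cylinder bs = moebius_mat (cf_matrix bs) ` {0..1}"

lemma finite_words12: "finite (words12 n)"
  unfolding words12_def using finite_lists_length_eq[of "{1, 2 :: nat}" n] by (simp add: conj_commute)

lemma words12_nonzero: "bs \<in> words12 n \<Longrightarrow> 0 \<notin> set bs"
  by (auto simp: words12_def)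

lemma cf_bounded_set_2_subset_cylinders:
  assumes "x \<in> cf_bounded_set 2"
  shows "\<exists>bs\<in>words12 n. x \<in> cylinder bs"
proof
  have x: "0 < x" "x < 1" "x \<notin> \<rat>" and bounded: "\<And>i. partial_quotient x i \<le> 2"
    using assms by (auto simp: cf_bounded_set_def order.order_iff_strict)
  have "nat (partial_quotient x i) \<in> {1, 2}" for i
  proof -
    have "partial_quotient x i = 1 \<or> partial_quotient x i = 2"
      using partial_quotient_ge_1[OF x, of i] bounded[of i] by auto
    then show ?thesis by auto
  qed
  then show "cf_prefix x n \<in> words12 n"
    by (auto simp: words12_def cf_prefix_def)
  show "x \<in> cylinder (cf_prefix x n)"
    using moebius_mat_cf_prefix[OF x, of n] gauss_map_iterate[OF x, of n]
    unfolding cylinder_def by (intro image_eqI[of _ _ "(gauss_map ^^ n) x"]) auto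
qed

text \<open>Two points of a cylinder differ by $\lvert t - t' \rvert / ((q' t + q)(q' t' + q)) \le 1 / q^2$,
  as the matrix has determinant $\pm 1$.\<close>

lemma moebius_mat_cf_matrix_dist:
  assumes "0 \<notin> set bs" "t \<in> {0..1}" "t' \<in> {0..1}"
  shows "\<bar>moebius_mat (cf_matrix bs) t - moebius_mat (cf_matrix bs) t'\<bar> \<le> 1 / of_int (cf_q bs) ^ 2"
proof -
  define a where "a = real_of_int (cf_p_prev bs)"
  define p where "p = real_of_int (cf_p bs)"
  define c where "c = real_of_int (cf_q_prev bs)"
  define q where "q = real_of_int (cf_q bs)"
  have nonneg: "0 \<le> c" "1 \<le> q"
    using cf_matrix_entries_nonneg[OF assms(1)] by (simp_all add: c_def q_def)
  have "a * q - p * c = of_int (cf_p_prev bs * cf_q bs - cf_p bs * cf_q_prev bs)"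
    by (simp add: a_def p_def c_def q_def)
  also have "\<dots> = of_int ((-1) ^ length bs)"
    using mdet_cf_matrix[of bs] by (simp only: mdet_def)
  finally have det: "\<bar>a * q - p * c\<bar> = 1"
    by simp
  have den: "q \<le> c * t + q" "q \<le> c * t' + q"
    using nonneg assms(2,3) by simp_all
  then have "moebius_mat (cf_matrix bs) t - moebius_mat (cf_matrix bs) t'
      = (a * q - p * c) * (t - t') / ((c * t + q) * (c * t' + q))"
    using nonneg by (simp add: moebius_mat_def a_def p_def c_def q_def field_simps)
  moreover have "\<bar>(a * q - p * c) * (t - t')\<bar> \<le> 1"
    using det assms(2,3) by (simp add: abs_mult abs_le_iff)
  moreover have "q * q \<le> (c * t + q) * (c * t' + q)"
    using den nonneg by (intro mult_mono) auto
  ultimately show ?thesis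
    using nonneg by (simp add: abs_divide frac_le power2_eq_square q_def)
qed

lemma bounded_cylinder_diameter_le:
  assumes "0 \<notin> set bs"
  shows "bounded (cylinder bs) \<and> diameter (cylinder bs) \<le> 1 / of_int (cf_q bs) ^ 2"
proof
  have "\<bar>x - moebius_mat (cf_matrix bs) 0\<bar> \<le> 1 / of_int (cf_q bs) ^ 2" if "x \<in> cylinder bs" for x
    using that moebius_mat_cf_matrix_dist[OF assms] by (auto simp: cylinder_def)
  then have "norm x \<le> \<bar>moebius_mat (cf_matrix bs) 0\<bar> + 1 / of_int (cf_q bs) ^ 2"
    if "x \<in> cylinder bs" for x
    using that by fastforce
  then show "bounded (cylinder bs)"
    unfolding bounded_iff by blast
  show "diameter (cylinder bs) \<le> 1 / of_int (cf_q bs) ^ 2"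
    using moebius_mat_cf_matrix_dist[OF assms] by (intro diameter_le) (auto simp: cylinder_def)
qed

lemma words12_add_subset: "words12 (m + n) \<subseteq> (\<lambda>(u, v). u @ v) ` (words12 m \<times> words12 n)"
proof
  fix bs assume bs: "bs \<in> words12 (m + n)"
  then have "(take m bs, drop m bs) \<in> words12 m \<times> words12 n"
    by (auto simp: words12_def dest: in_set_takeD in_set_dropD)
  then show "bs \<in> (\<lambda>(u, v). u @ v) ` (words12 m \<times> words12 n)"
    by (rule rev_image_eqI) simp
qed

lemma words12_2: "words12 2 = {[1, 1], [1, 2], [2, 1], [2, 2]}"
  by (auto simp: words12_def length_Suc_conv numeral_2_eq_2)

lemma cf_q_words12_ge: "bs \<in> words12 (2 * k) \<Longrightarrow> 2 ^ k \<le> real_of_int (cf_q bs)"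
proof (induction k arbitrary: bs)
  case 0
  then show ?case by (simp add: words12_def)
next
  case (Suc k)
  then obtain u v where uv: "u \<in> words12 2" "v \<in> words12 (2 * k)" "bs = u @ v"
    using words12_add_subset[of 2 "2 * k"] by auto
  have "2 * 2 ^ k \<le> real_of_int (cf_q u) * real_of_int (cf_q v)"
    using uv(1) Suc.IH[OF uv(2)] by (intro mult_mono) (auto simp: words12_2 cf_matrix_Cons cf_gen_def)
  also have "\<dots> \<le> real_of_int (cf_q bs)"
    using cf_q_append_ge[OF words12_nonzero[OF uv(1)] words12_nonzero[OF uv(2)]] uv(3)
    by (simp flip: of_int_mult)
  finally show ?case by simp
qed

definition cylinder_weight :: "nat list \<Rightarrow> real" where
  "cylinder_weight bs = (1 / of_int (cf_q bs) ^ 2) powr (3 / 4)"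

lemma cylinder_weight_append_le:
  assumes "0 \<notin> set u" "0 \<notin> set v"
  shows "cylinder_weight (u @ v) \<le> cylinder_weight u * cylinder_weight v"
proof -
  define U where "U = real_of_int (cf_q u)"
  define V where "V = real_of_int (cf_q v)"
  have "1 \<le> U" "1 \<le> V"
    using cf_q_pos assms by (simp_all add: U_def V_def)
  moreover have "U * V \<le> real_of_int (cf_q (u @ v))"
    using cf_q_append_ge[OF assms] by (simp add: U_def V_def flip: of_int_mult)
  ultimately have "1 / real_of_int (cf_q (u @ v)) ^ 2 \<le> 1 / U ^ 2 * (1 / V ^ 2)"
    using mult_mono[of 1 U 1 V] by (simp add: power_mult_distrib[symmetric] frac_le power_mono)
  then have "cylinder_weight (u @ v) \<le> (1 / U ^ 2 * (1 / V ^ 2)) powr (3 / 4)"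
    unfolding cylinder_weight_def by (rule powr_mono2[rotated 2]) simp_all
  also have "\<dots> = cylinder_weight u * cylinder_weight v"
    unfolding cylinder_weight_def U_def V_def by (rule powr_mult)
  finally show ?thesis .
qed

lemma powr_three_quarters_le:
  fixes x b :: real
  assumes "0 < x" "0 \<le> b" "x ^ 3 \<le> b ^ 4"
  shows "x powr (3 / 4) \<le> b"
proof -
  have "(x powr (3 / 4)) ^ 4 = x powr (of_nat 4 * (3 / 4))"
    using assms(1) by (simp add: powr_power)
  also have "\<dots> = x ^ 3"
    using assms(1) by simp
  finally have "(x powr (3 / 4)) ^ 4 = x ^ 3" .
  then have "(x powr (3 / 4)) ^ Suc 3 \<le> b ^ Suc 3"
    using assms(3) by simp
  then show ?thesis
    using assms(2) by (rule power_le_imp_le_base)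
qed

lemma sum_cylinder_weight_words12_le: "(\<Sum>bs\<in>words12 (2 * k). cylinder_weight bs) \<le> (17 / 20) ^ k"
proof (induction k)
  case 0
  have "words12 0 = {[]}"
    by (auto simp: words12_def)
  then show ?case
    by (simp add: cylinder_weight_def)
next
  case (Suc k)
  have "(1 / 4 :: real) powr (3 / 4) \<le> 9 / 25" "(1 / 9 :: real) powr (3 / 4) \<le> 1 / 5"
    "(1 / 25 :: real) powr (3 / 4) \<le> 9 / 100"
    by (rule powr_three_quarters_le; simp add: power_divide)+
  then have W2: "(\<Sum>bs\<in>words12 2. cylinder_weight bs) \<le> 17 / 20"
    by (simp add: words12_2 cylinder_weight_def cf_matrix_Cons cf_gen_def)
  have "(\<Sum>bs\<in>words12 (2 * Suc k). cylinder_weight bs)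
      \<le> (\<Sum>bs\<in>(\<lambda>(u, v). u @ v) ` (words12 2 \<times> words12 (2 * k)). cylinder_weight bs)"
    using words12_add_subset[of 2 "2 * k"] finite_words12
    by (intro sum_mono2) (auto simp: cylinder_weight_def)
  also have "\<dots> \<le> (\<Sum>(u, v)\<in>words12 2 \<times> words12 (2 * k). cylinder_weight (u @ v))"
    using finite_words12 sum_image_le[of "words12 2 \<times> words12 (2 * k)" cylinder_weight "\<lambda>(u, v). u @ v"]
    by (simp add: cylinder_weight_def split_def)
  also have "\<dots> \<le> (\<Sum>(u, v)\<in>words12 2 \<times> words12 (2 * k). cylinder_weight u * cylinder_weight v)"
    using cylinder_weight_append_le words12_nonzero by (intro sum_mono) (auto simp: split_def)
  also have "\<dots> = (\<Sum>u\<in>words12 2. cylinder_weight u) * (\<Sum>v\<in>words12 (2 * k). cylinder_weight v)"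
    by (simp add: sum_product sum.cartesian_product)
  also have "\<dots> \<le> 17 / 20 * (17 / 20) ^ k"
    using W2 Suc.IH by (intro mult_mono) (simp_all add: sum_nonneg cylinder_weight_def)
  finally show ?case
    by simp
qed

lemma hausdorff_pre_cf_bounded_set_2_le:
  assumes "0 < \<delta>" "(1 / 4) ^ k \<le> \<delta>"
  shows "hausdorff_pre (3 / 4) \<delta> (cf_bounded_set 2) \<le> ennreal ((17 / 20) ^ k)"
proof -
  have cover: "bounded (cylinder bs) \<and> diameter (cylinder bs) \<le> \<delta>" if "bs \<in> words12 (2 * k)" for bs
  proof -
    have "(2 ^ k) ^ 2 \<le> real_of_int (cf_q bs) ^ 2"
      using cf_q_words12_ge[OF that] by (intro power_mono) simp_all
    moreover have "((2 :: real) ^ k) ^ 2 = 4 ^ k"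
      by (simp add: power2_eq_square flip: power_mult_distrib)
    ultimately have "4 ^ k \<le> real_of_int (cf_q bs) ^ 2"
      by simp
    then have "1 / real_of_int (cf_q bs) ^ 2 \<le> 1 / 4 ^ k"
      using frac_le[of 1 1 "4 ^ k" "real_of_int (cf_q bs) ^ 2"] by simp
    then have "1 / real_of_int (cf_q bs) ^ 2 \<le> (1 / 4) ^ k"
      by (simp add: power_one_over)
    then show ?thesis
      using bounded_cylinder_diameter_le[OF words12_nonzero[OF that]] assms(2) by linarith
  qed
  have "hausdorff_pre (3 / 4) \<delta> (cf_bounded_set 2)
      \<le> ennreal (\<Sum>bs\<in>words12 (2 * k). hd_term (3 / 4) (cylinder bs))"
    using cf_bounded_set_2_subset_cylinders cover assms(1)
    by (intro hausdorff_pre_le_finite_cover finite_words12) auto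
  also have "\<dots> \<le> ennreal (\<Sum>bs\<in>words12 (2 * k). cylinder_weight bs)"
  proof (intro ennreal_leI sum_mono)
    fix bs assume "bs \<in> words12 (2 * k)"
    then have "0 \<le> diameter (cylinder bs)" "diameter (cylinder bs) \<le> 1 / of_int (cf_q bs) ^ 2"
      using bounded_cylinder_diameter_le words12_nonzero by (auto simp: diameter_ge_0)
    then show "hd_term (3 / 4) (cylinder bs) \<le> cylinder_weight bs"
      by (auto simp: hd_term_def cylinder_weight_def cylinder_def intro: powr_mono2)
  qed
  also have "\<dots> \<le> ennreal ((17 / 20) ^ k)"
    using sum_cylinder_weight_words12_le by (rule ennreal_leI)
  finally show ?thesis .
qed

lemma w_2_le: "w 2 \<le> 3 / 4"
  unfolding w_def
proof (rule hausdorff_dim_le)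
  fix \<delta> :: real assume \<delta>: "0 < \<delta>"
  have bound: "hausdorff_pre (3 / 4) \<delta> (cf_bounded_set 2) \<le> ennreal e" if e: "0 < e" for e
  proof -
    obtain k1 where "(17 / 20 :: real) ^ k1 < e"
      using real_arch_pow_inv[OF e, of "17 / 20"] by auto
    moreover obtain k2 where "(1 / 4 :: real) ^ k2 < \<delta>"
      using real_arch_pow_inv[OF \<delta>, of "1 / 4"] by auto
    moreover have "(17 / 20 :: real) ^ (k1 + k2) \<le> (17 / 20) ^ k1" "(1 / 4 :: real) ^ (k1 + k2) \<le> (1 / 4) ^ k2"
      by (simp_all add: power_decreasing)
    ultimately have k: "(1 / 4) ^ (k1 + k2) \<le> \<delta>" "(17 / 20 :: real) ^ (k1 + k2) \<le> e"
      by linarith+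
    have "hausdorff_pre (3 / 4) \<delta> (cf_bounded_set 2) \<le> ennreal ((17 / 20) ^ (k1 + k2))"
      by (rule hausdorff_pre_cf_bounded_set_2_le[OF \<delta> k(1)])
    also have "\<dots> \<le> ennreal e"
      by (rule ennreal_leI[OF k(2)])
    finally show ?thesis .
  qed
  have "hausdorff_pre (3 / 4) \<delta> (cf_bounded_set 2) \<le> 0"
  proof (rule ennreal_le_epsilon)
    fix e :: real assume "0 < e"
    then show "hausdorff_pre (3 / 4) \<delta> (cf_bounded_set 2) \<le> 0 + ennreal e"
      using bound by simp
  qed
  then show "hausdorff_pre (3 / 4) \<delta> (cf_bounded_set 2) = 0"
    by simp
qed simp

theorem corollary17:
  fixes M :: nat
  assumes "M \<ge> 2"
    and "w M > 3/4"
  shows "\<exists>c>0. \<forall>p::nat. prime p \<longrightarrow>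
           real (card (prod3 p (cfA M p) (borel p) (cfA M p))) \<ge> c * real p ^ 3 \<and>
           real (card (prod3 p (inv_set p (cfA M p)) (borel p) (inv_set p (cfA M p))))
              \<ge> c * real p ^ 3"
proof -
  have "M \<noteq> 2"
    using w_2_le assms(2) by auto
  with assms(1) have "3 \<le> M"
    by simp
  then show ?thesis
    by (rule card_prod3_cfA_ge_cube)
qed

end
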